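(* Let $(G,M,\Delta)$ be a Garside structure and $(H,N,\delta)$ a parabolic substructure with $H\neq\{1\}$. Let $\mathcal S=\mathrm{Div}(\Delta)\setminus\{1\}$, let $\lg$ be word length in $G$ with respect to $\mathcal S$, and for a right coset $C$ of $H$ let $\lg(C)=\min\{\lg(\beta):\beta\in C\}$. For $n\in\mathbb N$ let $e(n)$ be the number of right cosets of $H$ in $G$ of length $n$. Then the coset growth series $\mathrm{Gr}_{G,H,\mathcal S}(t)=\sum_{n=0}^\infty e(n)t^n$ is a rational function of $t$.
   Context: Let $G$ be a group and $M$ a submonoid with $M\cap M^{-1}=\{1\}$. Define $\alpha\le_L\beta$ iff $\alpha^{-1}\beta\in M$, and $\alpha\le_R\beta$ iff $\beta\alpha^{-1}\in M$. For $a\in M$ let $\mathrm{Div}_L(a)=\{b\in M: b\le_L a\}$, $\mathrm{Div}_R(a)=\{b\in M: b\le_R a\}$; $a$ is balanced if these coincide, and then $\mathrm{Div}(a)$ denotes this set. $M$ is Noetherian if each $a\in M$ admits an $n$ such that $a$ is not a product of more than $n$ non-trivial factors. A Garside structure $(G,M,\Delta)$: $\Delta\in M$ balanced, $M$ Noetherian, $\mathrm{Div}(\Delta)$ finite and generating $M$ as a monoid and $G$ as a group, $(G,\le_L)$ a lattice. A parabolic substructure $(H,N,\delta)$: $\delta\in M$ balanced, $H$ (resp. $N$) the subgroup (resp. submonoid) generated by $\mathrm{Div}(\delta)$, and $\mathrm{Div}(\delta)=\mathrm{Div}(\Delta)\cap N$. *)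

theory Defs
  imports "HOL-Algebra.Algebra" "HOL-Computational_Algebra.Polynomial_FPS"
begin

definition lprod :: "('a, 'b) monoid_scheme \<Rightarrow> 'a list \<Rightarrow> 'a" where
  "lprod G xs = foldr (\<lambda>x y. x \<otimes>\<^bsub>G\<^esub> y) xs \<one>\<^bsub>G\<^esub>"

definition mon_gen :: "('a, 'b) monoid_scheme \<Rightarrow> 'a set \<Rightarrow> 'a set" where
  "mon_gen G A = {lprod G xs | xs. set xs \<subseteq> A}"

definition leL :: "('a, 'b) monoid_scheme \<Rightarrow> 'a set \<Rightarrow> 'a \<Rightarrow> 'a \<Rightarrow> bool" where
  "leL G M x y \<longleftrightarrow> inv\<^bsub>G\<^esub> x \<otimes>\<^bsub>G\<^esub> y \<in> M"

definition leR :: "('a, 'b) monoid_scheme \<Rightarrow> 'a set \<Rightarrow> 'a \<Rightarrow> 'a \<Rightarrow> bool" where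
  "leR G M x y \<longleftrightarrow> y \<otimes>\<^bsub>G\<^esub> inv\<^bsub>G\<^esub> x \<in> M"

definition DivL :: "('a, 'b) monoid_scheme \<Rightarrow> 'a set \<Rightarrow> 'a \<Rightarrow> 'a set" where
  "DivL G M a = {b \<in> M. leL G M b a}"

definition DivR :: "('a, 'b) monoid_scheme \<Rightarrow> 'a set \<Rightarrow> 'a \<Rightarrow> 'a set" where
  "DivR G M a = {b \<in> M. leR G M b a}"

definition balanced :: "('a, 'b) monoid_scheme \<Rightarrow> 'a set \<Rightarrow> 'a \<Rightarrow> bool" where
  "balanced G M a \<longleftrightarrow> a \<in> M \<and> DivL G M a = DivR G M a"

text \<open>Div(a) for balanced a (the common value of DivL and DivR).\<close>
definition Div :: "('a, 'b) monoid_scheme \<Rightarrow> 'a set \<Rightarrow> 'a \<Rightarrow> 'a set" where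
  "Div G M a = DivL G M a"

definition noetherian :: "('a, 'b) monoid_scheme \<Rightarrow> 'a set \<Rightarrow> bool" where
  "noetherian G M \<longleftrightarrow> (\<forall>a\<in>M. \<exists>n::nat. \<forall>xs. set xs \<subseteq> M - {\<one>\<^bsub>G\<^esub>} \<and> lprod G xs = a
      \<longrightarrow> length xs \<le> n)"

definition leL_lattice :: "('a, 'b) monoid_scheme \<Rightarrow> 'a set \<Rightarrow> bool" where
  "leL_lattice G M \<longleftrightarrow>
     (\<forall>x\<in>carrier G. leL G M x x) \<and>
     (\<forall>x\<in>carrier G. \<forall>y\<in>carrier G. leL G M x y \<and> leL G M y x \<longrightarrow> x = y) \<and>
     (\<forall>x\<in>carrier G. \<forall>y\<in>carrier G. \<forall>z\<in>carrier G. leL G M x y \<and> leL G M y z \<longrightarrow> leL G M x z) \<and>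
     (\<forall>x\<in>carrier G. \<forall>y\<in>carrier G. \<exists>s\<in>carrier G. leL G M x s \<and> leL G M y s \<and>
         (\<forall>u\<in>carrier G. leL G M x u \<and> leL G M y u \<longrightarrow> leL G M s u)) \<and>
     (\<forall>x\<in>carrier G. \<forall>y\<in>carrier G. \<exists>i\<in>carrier G. leL G M i x \<and> leL G M i y \<and>
         (\<forall>u\<in>carrier G. leL G M u x \<and> leL G M u y \<longrightarrow> leL G M u i))"

definition garside_structure :: "('a, 'b) monoid_scheme \<Rightarrow> 'a set \<Rightarrow> 'a \<Rightarrow> bool" where
  "garside_structure G M \<Delta> \<longleftrightarrow>
     group G \<and> submonoid M G \<and> {x \<in> M. inv\<^bsub>G\<^esub> x \<in> M} = {\<one>\<^bsub>G\<^esub>} \<and>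
     balanced G M \<Delta> \<and> noetherian G M \<and> finite (Div G M \<Delta>) \<and>
     mon_gen G (Div G M \<Delta>) = M \<and> generate G (Div G M \<Delta>) = carrier G \<and>
     leL_lattice G M"

definition parabolic_substructure ::
  "('a, 'b) monoid_scheme \<Rightarrow> 'a set \<Rightarrow> 'a \<Rightarrow> 'a set \<Rightarrow> 'a set \<Rightarrow> 'a \<Rightarrow> bool" where
  "parabolic_substructure G M \<Delta> H N \<delta> \<longleftrightarrow>
     \<delta> \<in> M \<and> balanced G M \<delta> \<and> H = generate G (Div G M \<delta>) \<and> N = mon_gen G (Div G M \<delta>) \<and>
     Div G M \<delta> = Div G M \<Delta> \<inter> N"

definition word_length :: "('a, 'b) monoid_scheme \<Rightarrow> 'a set \<Rightarrow> 'a \<Rightarrow> nat" where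
  "word_length G S g = (LEAST n. \<exists>xs. length xs = n \<and> set xs \<subseteq> S \<union> (\<lambda>s. inv\<^bsub>G\<^esub> s) ` S \<and> lprod G xs = g)"

definition coset_length :: "('a, 'b) monoid_scheme \<Rightarrow> 'a set \<Rightarrow> 'a set \<Rightarrow> nat" where
  "coset_length G S C = (LEAST n. \<exists>\<beta>\<in>C. word_length G S \<beta> = n)"

definition coset_count :: "('a, 'b) monoid_scheme \<Rightarrow> 'a set \<Rightarrow> 'a set \<Rightarrow> nat \<Rightarrow> nat" where
  "coset_count G H S n = card {C \<in> rcosets\<^bsub>G\<^esub> H. coset_length G S C = n}"

definition rational_fps :: "'a::field fps \<Rightarrow> bool" where
  "rational_fps F \<longleftrightarrow> (\<exists>p q. q \<noteq> 0 \<and> fps_of_poly q * F = fps_of_poly p)"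

end

theory Submission
  imports Defs
begin

text \<open>
  The word length of \<open>x\<close> with respect to \<open>Div(\<Delta>) - {1}\<close> is at most \<open>n\<close> iff
  \<open>\<Delta>\<^sup>-\<^sup>b \<preceq> x \<preceq> \<Delta>\<^bsup>n-b\<^esup>\<close> for some \<open>b \<le> n\<close>, so the cosets of length at most \<open>n\<close> form the
  union over \<open>b \<le> n\<close> of the sets \<open>B(b, n - b)\<close> of cosets meeting \<open>[\<Delta>\<^sup>-\<^sup>b, \<Delta>\<^bsup>n-b\<^esup>]\<close>.
  A coset meeting \<open>M\<close> has a unique representative without non-trivial left divisors in
  \<open>Div(\<delta>)\<close> (a reduced element), and right multiplication by \<open>\<Delta>\<^sup>b\<close> maps \<open>B(b, a)\<close>
  bijectively onto the cosets of the \<open>r(a + b)\<close> reduced elements below \<open>\<Delta>\<^bsup>a+b\<^esup>\<close>. By a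
  convexity argument, \<open>B(0, n) \<union> \<dots> \<union> B(k, n - k)\<close> meets \<open>B(k + 1, n - k - 1)\<close> exactly in
  \<open>B(k, n - k - 1)\<close>, so inclusion-exclusion gives \<open>(n + 1) r(n) - n r(n - 1)\<close> cosets of length
  at most \<open>n\<close>. Grouping the elements below \<open>\<Delta>\<^sup>w\<close> by their head (the first factor of the
  left-greedy normal form) yields a linear recurrence over the finite set \<open>Div(\<Delta>)\<close>, so the
  generating function \<open>R\<close> of \<open>r\<close> is rational, and the growth series is \<open>(1 - t)\<^sup>2 (t R(t))'\<close>.
\<close>

section \<open>Rational power series\<close>

lemma rational_fps_of_poly: "rational_fps (fps_of_poly p)"
  unfolding rational_fps_def by (intro exI[of _ p] exI[of _ 1]) simp

lemma rational_fps_const: "rational_fps (fps_const c)"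
  using rational_fps_of_poly[of "[:c:]"] by (simp add: fps_of_poly_const)

lemma rational_fps_X: "rational_fps fps_X"
  using rational_fps_of_poly[of "[:0, 1:]"] by (simp add: fps_of_poly_simps)

lemma rational_fps_add:
  assumes "rational_fps F" "rational_fps F'"
  shows "rational_fps (F + F')"
proof -
  from assms obtain p q p' q' where q: "q \<noteq> 0" "fps_of_poly q * F = fps_of_poly p"
    and q': "q' \<noteq> 0" "fps_of_poly q' * F' = fps_of_poly p'"
    unfolding rational_fps_def by blast
  have "fps_of_poly (q * q') * (F + F') =
      fps_of_poly q' * (fps_of_poly q * F) + fps_of_poly q * (fps_of_poly q' * F')"
    by (simp add: fps_of_poly_mult algebra_simps)
  also have "\<dots> = fps_of_poly (q' * p + q * p')"
    using q q' by (simp add: fps_of_poly_mult fps_of_poly_add)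
  finally show ?thesis
    unfolding rational_fps_def using q q' by (intro exI[of _ "q' * p + q * p'"] exI[of _ "q * q'"]) simp
qed

lemma rational_fps_mult:
  assumes "rational_fps F" "rational_fps F'"
  shows "rational_fps (F * F')"
proof -
  from assms obtain p q p' q' where q: "q \<noteq> 0" "fps_of_poly q * F = fps_of_poly p"
    and q': "q' \<noteq> 0" "fps_of_poly q' * F' = fps_of_poly p'"
    unfolding rational_fps_def by blast
  have "fps_of_poly (q * q') * (F * F') = (fps_of_poly q * F) * (fps_of_poly q' * F')"
    by (simp add: fps_of_poly_mult algebra_simps)
  also have "\<dots> = fps_of_poly (p * p')"
    using q q' by (simp add: fps_of_poly_mult)
  finally show ?thesis
    unfolding rational_fps_def using q q' by (intro exI[of _ "p * p'"] exI[of _ "q * q'"]) simp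
qed

lemma rational_fps_diff:
  assumes "rational_fps F" "rational_fps F'"
  shows "rational_fps (F - F')"
  using rational_fps_add[OF assms(1) rational_fps_mult[OF rational_fps_const[of "-1"] assms(2)]]
  by (simp flip: fps_const_neg)

lemma rational_fps_sum:
  assumes "\<And>i. i \<in> A \<Longrightarrow> rational_fps (F i)"
  shows "rational_fps (\<Sum>i\<in>A. F i)"
  using assms
  by (induction A rule: infinite_finite_induct)
    (simp_all add: rational_fps_add rational_fps_const[of 0, simplified])

lemma rational_fps_inverse:
  assumes "rational_fps F" "fps_nth F 0 \<noteq> 0"
  shows "rational_fps (inverse F)"
proof -
  from assms(1) obtain p q where q: "q \<noteq> 0" "fps_of_poly q * F = fps_of_poly p"
    unfolding rational_fps_def by blast
  have "F \<noteq> 0"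
    using assms(2) by auto
  then have "p \<noteq> 0"
    using q by auto
  moreover have "fps_of_poly p * inverse F = fps_of_poly q"
    using q(2)[symmetric] inverse_mult_eq_1'[OF assms(2)] by (simp add: mult.assoc)
  ultimately show ?thesis
    unfolding rational_fps_def by blast
qed

lemma rational_fps_deriv:
  assumes "rational_fps F"
  shows "rational_fps (fps_deriv F)"
proof -
  from assms obtain p q where q: "q \<noteq> 0" "fps_of_poly q * F = fps_of_poly p"
    unfolding rational_fps_def by blast
  \<comment> \<open>differentiate \<open>q F = p\<close> and multiply by \<open>q\<close>: \<open>q\<^sup>2 F' = q p' - q' p\<close>\<close>
  have deriv_eq: "fps_of_poly q * fps_deriv F = fps_of_poly (pderiv p) - fps_of_poly (pderiv q) * F"
    using arg_cong[OF q(2), of fps_deriv] by (simp add: fps_of_poly_pderiv algebra_simps)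
  have "fps_of_poly (q * q) * fps_deriv F = fps_of_poly q * (fps_of_poly q * fps_deriv F)"
    by (simp add: fps_of_poly_mult mult.assoc)
  also have "\<dots> = fps_of_poly q * fps_of_poly (pderiv p) - fps_of_poly (pderiv q) * (fps_of_poly q * F)"
    unfolding deriv_eq by (simp only: right_diff_distrib mult.left_commute)
  also have "\<dots> = fps_of_poly (q * pderiv p - pderiv q * p)"
    by (simp only: q(2) fps_of_poly_mult fps_of_poly_diff)
  finally show ?thesis
    unfolding rational_fps_def using q(1)
    by (intro exI[of _ "q * pderiv p - pderiv q * p"] exI[of _ "q * q"]) simp
qed

text \<open>Gaussian elimination over the field of rational power series: the constant terms of the
  coefficients vanish, so each pivot \<open>1 - c s s\<close> is invertible.\<close>

lemma rational_fps_linear_system: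
  fixes Y b :: "'s \<Rightarrow> 'a::field fps" and c :: "'s \<Rightarrow> 's \<Rightarrow> 'a fps"
  assumes "finite U"
    and "\<And>s. s \<in> U \<Longrightarrow> Y s = b s + (\<Sum>s'\<in>U. c s s' * Y s')"
    and "\<And>s. s \<in> U \<Longrightarrow> rational_fps (b s)"
    and "\<And>s s'. s \<in> U \<Longrightarrow> s' \<in> U \<Longrightarrow> rational_fps (c s s') \<and> fps_nth (c s s') 0 = 0"
  shows "\<forall>s\<in>U. rational_fps (Y s)"
  using assms
proof (induction U arbitrary: b c rule: finite_induct)
  case empty
  then show ?case by simp
next
  case (insert s0 U)
  define d where "d = 1 - c s0 s0"
  have d0: "fps_nth d 0 \<noteq> 0"
    using insert.prems(3) unfolding d_def by simp
  have rational_inv_d: "rational_fps (inverse d)"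
    unfolding d_def using insert.prems(3) d0 unfolding d_def
    by (intro rational_fps_inverse rational_fps_diff) (simp_all add: rational_fps_const[of 1, simplified])
  define \<beta> where "\<beta> = inverse d * b s0"
  define \<gamma> where "\<gamma> s' = inverse d * c s0 s'" for s'
  have "d * Y s0 = b s0 + (\<Sum>s'\<in>U. c s0 s' * Y s')"
    using insert.prems(1)[of s0] insert.hyps unfolding d_def by (simp add: algebra_simps)
  then have "inverse d * (d * Y s0) = \<beta> + (\<Sum>s'\<in>U. \<gamma> s' * Y s')"
    unfolding \<beta>_def \<gamma>_def by (simp add: distrib_left sum_distrib_left mult.assoc)
  then have Y0: "Y s0 = \<beta> + (\<Sum>s'\<in>U. \<gamma> s' * Y s')"
    by (simp add: mult.assoc[symmetric] inverse_mult_eq_1[OF d0])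
  have rational_\<beta>: "rational_fps \<beta>"
    unfolding \<beta>_def using rational_inv_d insert.prems(2) by (simp add: rational_fps_mult)
  have rational_\<gamma>: "rational_fps (\<gamma> s') \<and> fps_nth (\<gamma> s') 0 = 0" if "s' \<in> U" for s'
    unfolding \<gamma>_def using rational_inv_d insert.prems(3) that by (simp add: rational_fps_mult)
  \<comment> \<open>substituting \<open>Y s0\<close> leaves a system in the unknowns of \<open>U\<close>\<close>
  have "\<forall>s\<in>U. rational_fps (Y s)"
  proof (rule insert.IH)
    fix s assume s: "s \<in> U"
    have "Y s = b s + c s s0 * Y s0 + (\<Sum>s'\<in>U. c s s' * Y s')"
      using insert.prems(1)[of s] insert.hyps s by (simp add: add.assoc)
    then show "Y s = (b s + c s s0 * \<beta>) + (\<Sum>s'\<in>U. (c s s' + c s s0 * \<gamma> s') * Y s')"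
      unfolding Y0 by (simp add: algebra_simps sum.distrib sum_distrib_left)
  next
    fix s s' assume "s \<in> U" "s' \<in> U"
    then show "rational_fps (c s s' + c s s0 * \<gamma> s') \<and> fps_nth (c s s' + c s s0 * \<gamma> s') 0 = 0"
      using insert.prems(3) rational_\<gamma> by (simp add: rational_fps_add rational_fps_mult)
  qed (use insert.prems(2,3) rational_\<beta> in \<open>simp add: rational_fps_add rational_fps_mult\<close>)
  moreover have "rational_fps (Y s0)"
    unfolding Y0 using rational_\<beta> rational_\<gamma> calculation
    by (simp add: rational_fps_add rational_fps_sum rational_fps_mult)
  ultimately show ?case by simp
qed

lemma rational_fps_linear_recurrence:
  fixes v :: "nat \<Rightarrow> 's \<Rightarrow> 'a::field" and A :: "'s \<Rightarrow> 's \<Rightarrow> 'a"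
  assumes "finite U" and "\<And>w s. s \<in> U \<Longrightarrow> v (Suc w) s = (\<Sum>s'\<in>U. A s s' * v w s')"
  shows "\<forall>s\<in>U. rational_fps (Abs_fps (\<lambda>w. v w s))"
proof (rule rational_fps_linear_system[OF assms(1)])
  fix s assume s: "s \<in> U"
  show "Abs_fps (\<lambda>w. v w s) =
      fps_const (v 0 s) + (\<Sum>s'\<in>U. fps_const (A s s') * fps_X * Abs_fps (\<lambda>w. v w s'))"
  proof (rule fps_ext)
    fix n
    show "fps_nth (Abs_fps (\<lambda>w. v w s)) n = fps_nth (fps_const (v 0 s) +
        (\<Sum>s'\<in>U. fps_const (A s s') * fps_X * Abs_fps (\<lambda>w. v w s'))) n"
      using assms(2)[OF s] by (cases n) (simp_all add: fps_sum_nth mult.assoc)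
  qed
qed (simp_all add: rational_fps_const rational_fps_mult rational_fps_X)

lemma Abs_fps_eq_one_minus_X_mult:
  fixes f g :: "nat \<Rightarrow> 'a::comm_ring_1"
  assumes "\<And>n. f n = g n - (if n = 0 then 0 else g (n - 1))"
  shows "Abs_fps f = (1 - fps_X) * Abs_fps g"
proof (rule fps_ext)
  fix n
  have "(1 - fps_X) * Abs_fps g = Abs_fps g - fps_X * Abs_fps g"
    by (simp add: algebra_simps)
  then show "fps_nth (Abs_fps f) n = fps_nth ((1 - fps_X) * Abs_fps g) n"
    using assms by simp
qed

lemma lprod_Nil [simp]: "lprod G [] = \<one>\<^bsub>G\<^esub>"
  by (simp add: lprod_def)

lemma lprod_Cons [simp]: "lprod G (x # xs) = x \<otimes>\<^bsub>G\<^esub> lprod G xs"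
  by (simp add: lprod_def)

lemma lprod_in_mon_gen: "set xs \<subseteq> A \<Longrightarrow> lprod G xs \<in> mon_gen G A"
  unfolding mon_gen_def by blast

context monoid
begin

lemma lprod_closed [simp]: "set xs \<subseteq> carrier G \<Longrightarrow> lprod G xs \<in> carrier G"
  by (induction xs) auto

lemma lprod_append:
  "set xs \<subseteq> carrier G \<Longrightarrow> set ys \<subseteq> carrier G \<Longrightarrow> lprod G (xs @ ys) = lprod G xs \<otimes> lprod G ys"
  by (induction xs) (auto simp: m_assoc)

lemma lprod_filter_one:
  "set xs \<subseteq> carrier G \<Longrightarrow> lprod G (filter (\<lambda>x. x \<noteq> \<one>) xs) = lprod G xs"
  by (induction xs) auto

lemma lprod_in_submonoid: "submonoid M G \<Longrightarrow> set xs \<subseteq> M \<Longrightarrow> lprod G xs \<in> M"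
  by (induction xs) (auto simp: submonoid.one_closed submonoid.m_closed)

lemma mon_gen_subset_submonoid: "submonoid M G \<Longrightarrow> A \<subseteq> M \<Longrightarrow> mon_gen G A \<subseteq> M"
  unfolding mon_gen_def using lprod_in_submonoid by blast

lemma mon_gen_submonoid:
  assumes "A \<subseteq> carrier G"
  shows "submonoid (mon_gen G A) G"
proof
  show "mon_gen G A \<subseteq> carrier G"
    using assms unfolding mon_gen_def by auto
  show "\<one> \<in> mon_gen G A"
    using lprod_in_mon_gen[of "[]"] by simp
  fix x y assume "x \<in> mon_gen G A" "y \<in> mon_gen G A"
  then obtain xs ys where xs: "set xs \<subseteq> A" "x = lprod G xs" and ys: "set ys \<subseteq> A" "y = lprod G ys"
    unfolding mon_gen_def by blast
  then have "set xs \<subseteq> carrier G" "set ys \<subseteq> carrier G"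
    using assms by auto
  then show "x \<otimes> y \<in> mon_gen G A"
    using xs ys lprod_in_mon_gen[of "xs @ ys" A G] by (simp add: lprod_append)
qed

end

context group
begin

lemma inv_mult_cancel_left [simp]: "x \<in> carrier G \<Longrightarrow> y \<in> carrier G \<Longrightarrow> inv x \<otimes> (x \<otimes> y) = y"
  by (simp add: m_assoc[symmetric])

lemma mult_inv_cancel_left [simp]: "x \<in> carrier G \<Longrightarrow> y \<in> carrier G \<Longrightarrow> x \<otimes> (inv x \<otimes> y) = y"
  by (simp add: m_assoc[symmetric])

lemma mon_gen_subset_generate:
  assumes "A \<subseteq> carrier G"
  shows "mon_gen G A \<subseteq> generate G A"
proof
  fix x assume "x \<in> mon_gen G A"
  then obtain xs where "set xs \<subseteq> A" "x = lprod G xs"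
    unfolding mon_gen_def by blast
  moreover have "set xs \<subseteq> A \<Longrightarrow> lprod G xs \<in> generate G A"
    by (induction xs) (auto intro: generate.one generate.incl generate.eng)
  ultimately show "x \<in> generate G A" by simp
qed

lemma mon_gen_conj_closed:
  assumes "A \<subseteq> carrier G" "g \<in> carrier G" "\<And>s. s \<in> A \<Longrightarrow> inv g \<otimes> s \<otimes> g \<in> A"
    and "x \<in> mon_gen G A"
  shows "inv g \<otimes> x \<otimes> g \<in> mon_gen G A"
proof -
  interpret submonoid "mon_gen G A" G
    using mon_gen_submonoid[OF assms(1)] .
  obtain xs where xs: "set xs \<subseteq> A" "x = lprod G xs"
    using assms(4) unfolding mon_gen_def by blast
  have "inv g \<otimes> lprod G xs \<otimes> g \<in> mon_gen G A"
    using xs(1)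
  proof (induction xs)
    case Nil
    then show ?case using assms(2) by simp
  next
    case (Cons s xs)
    have "set xs \<subseteq> carrier G" "s \<in> carrier G"
      using Cons.prems assms(1) by auto
    then have "inv g \<otimes> lprod G (s # xs) \<otimes> g = (inv g \<otimes> s \<otimes> g) \<otimes> (inv g \<otimes> lprod G xs \<otimes> g)"
      using assms(2) by (simp add: m_assoc)
    moreover have "inv g \<otimes> s \<otimes> g \<in> mon_gen G A"
      using assms(3) Cons.prems lprod_in_mon_gen[of "[inv g \<otimes> s \<otimes> g]" A G] assms(1,2) by auto
    ultimately show ?case
      using Cons by auto
  qed
  then show ?thesis
    using xs by simp
qed

lemma conj_nat_pow_closed:
  assumes "A \<subseteq> carrier G" "g \<in> carrier G" "\<And>x. x \<in> A \<Longrightarrow> inv g \<otimes> x \<otimes> g \<in> A" "x \<in> A"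
  shows "inv (g [^] n) \<otimes> x \<otimes> g [^] (n::nat) \<in> A"
proof (induction n)
  case (Suc n)
  have "inv (g [^] Suc n) \<otimes> x \<otimes> g [^] Suc n = inv g \<otimes> (inv (g [^] n) \<otimes> x \<otimes> g [^] n) \<otimes> g"
    using assms(1,2,4) by (auto simp: m_assoc inv_mult_group)
  then show ?case
    using assms(3) Suc by simp
qed (use assms in auto)

end

lemma word_length_le_iff:
  assumes "\<exists>xs. set xs \<subseteq> S \<union> (\<lambda>s. inv\<^bsub>G\<^esub> s) ` S \<and> lprod G xs = y"
  shows "word_length G S y \<le> n \<longleftrightarrow>
    (\<exists>xs. set xs \<subseteq> S \<union> (\<lambda>s. inv\<^bsub>G\<^esub> s) ` S \<and> length xs \<le> n \<and> lprod G xs = y)"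
proof
  assume "word_length G S y \<le> n"
  moreover obtain xs where "length xs = word_length G S y"
    "set xs \<subseteq> S \<union> (\<lambda>s. inv\<^bsub>G\<^esub> s) ` S" "lprod G xs = y"
    using LeastI_ex[of "\<lambda>k. \<exists>xs. length xs = k \<and> set xs \<subseteq> S \<union> (\<lambda>s. inv\<^bsub>G\<^esub> s) ` S \<and> lprod G xs = y"]
      assms unfolding word_length_def by blast
  ultimately show "\<exists>xs. set xs \<subseteq> S \<union> (\<lambda>s. inv\<^bsub>G\<^esub> s) ` S \<and> length xs \<le> n \<and> lprod G xs = y"
    by auto
next
  assume "\<exists>xs. set xs \<subseteq> S \<union> (\<lambda>s. inv\<^bsub>G\<^esub> s) ` S \<and> length xs \<le> n \<and> lprod G xs = y"
  then obtain xs where "set xs \<subseteq> S \<union> (\<lambda>s. inv\<^bsub>G\<^esub> s) ` S" "length xs \<le> n" "lprod G xs = y"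
    by blast
  moreover have "word_length G S y \<le> length xs"
    unfolding word_length_def by (rule Least_le) (use calculation in blast)
  ultimately show "word_length G S y \<le> n" by simp
qed

lemma coset_length_le_iff:
  assumes "C \<noteq> {}"
  shows "coset_length G S C \<le> n \<longleftrightarrow> (\<exists>y\<in>C. word_length G S y \<le> n)"
proof
  assume le: "coset_length G S C \<le> n"
  obtain y where "y \<in> C" "word_length G S y = coset_length G S C"
    using LeastI_ex[of "\<lambda>k. \<exists>y\<in>C. word_length G S y = k"] assms
    unfolding coset_length_def by blast
  with le show "\<exists>y\<in>C. word_length G S y \<le> n"
    by (intro bexI[of _ y]) simp_all
next
  assume "\<exists>y\<in>C. word_length G S y \<le> n"
  then obtain y where "y \<in> C" "word_length G S y \<le> n"
    by blast
  moreover have "coset_length G S C \<le> word_length G S y"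
    unfolding coset_length_def by (rule Least_le) (use calculation in blast)
  ultimately show "coset_length G S C \<le> n" by simp
qed

section \<open>Garside structures\<close>

locale garside = group G for G :: "('a, 'b) monoid_scheme" (structure) +
  fixes M :: "'a set" and \<Delta> :: 'a
  assumes garside: "garside_structure G M \<Delta>"
begin

abbreviation simples :: "'a set" where
  "simples \<equiv> Div G M \<Delta>"

abbreviation prefix_le :: "'a \<Rightarrow> 'a \<Rightarrow> bool" (infix "\<preceq>" 50) where
  "x \<preceq> y \<equiv> leL G M x y"

lemma submonoid_M: "submonoid M G"
  using garside by (simp add: garside_structure_def)

lemma M_carrier [simp]: "x \<in> M \<Longrightarrow> x \<in> carrier G"
  using submonoid.subset[OF submonoid_M] by blast

lemma M_subset_carrier: "M \<subseteq> carrier G"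
  by auto

lemma one_in_M [simp]: "\<one> \<in> M"
  using submonoid.one_closed[OF submonoid_M] .

lemma M_mult_closed [simp]: "x \<in> M \<Longrightarrow> y \<in> M \<Longrightarrow> x \<otimes> y \<in> M"
  using submonoid.m_closed[OF submonoid_M] .

lemma M_pointed: "x \<in> M \<Longrightarrow> inv x \<in> M \<Longrightarrow> x = \<one>"
  using garside unfolding garside_structure_def by blast

lemma Delta_balanced: "balanced G M \<Delta>"
  using garside by (simp add: garside_structure_def)

lemma finite_simples: "finite simples"
  using garside by (simp add: garside_structure_def)

lemma mon_gen_simples: "mon_gen G simples = M"
  using garside by (simp add: garside_structure_def)

lemma M_noetherian: "noetherian G M"
  using garside by (simp add: garside_structure_def)

lemma generate_simples: "generate G simples = carrier G"
  using garside by (simp add: garside_structure_def)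

lemma M_elem_simple_product:
  assumes "x \<in> M"
  shows "\<exists>xs. set xs \<subseteq> simples \<and> lprod G xs = x"
proof -
  have "x \<in> mon_gen G simples"
    using assms by (simp only: mon_gen_simples)
  then show ?thesis
    unfolding mon_gen_def by blast
qed

lemma le_iff: "x \<preceq> y \<longleftrightarrow> inv x \<otimes> y \<in> M"
  by (simp add: leL_def)

lemma le_refl [simp]: "x \<in> carrier G \<Longrightarrow> x \<preceq> x"
  by (simp add: le_iff)

lemma le_trans:
  assumes "x \<preceq> y" "y \<preceq> z" "x \<in> carrier G" "y \<in> carrier G" "z \<in> carrier G"
  shows "x \<preceq> z"
proof -
  have "(inv x \<otimes> y) \<otimes> (inv y \<otimes> z) = inv x \<otimes> z"
    using assms(3-5) by (simp add: m_assoc)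
  then show ?thesis
    using assms(1,2) M_mult_closed unfolding le_iff by metis
qed

lemma le_antisym:
  assumes "x \<preceq> y" "y \<preceq> x" "x \<in> carrier G" "y \<in> carrier G"
  shows "x = y"
proof -
  have "inv (inv x \<otimes> y) = inv y \<otimes> x"
    using assms(3,4) by (simp add: inv_mult_group)
  then have "inv x \<otimes> y = \<one>"
    using assms M_pointed[of "inv x \<otimes> y"] by (simp add: le_iff)
  then have "x \<otimes> (inv x \<otimes> y) = x"
    using assms(3) by simp
  then show ?thesis
    using assms(3,4) by simp
qed

lemma le_left_mult_iff:
  "g \<in> carrier G \<Longrightarrow> x \<in> carrier G \<Longrightarrow> y \<in> carrier G \<Longrightarrow> g \<otimes> x \<preceq> g \<otimes> y \<longleftrightarrow> x \<preceq> y"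
  by (simp add: le_iff m_assoc inv_mult_group)

lemma one_le_iff: "x \<in> carrier G \<Longrightarrow> \<one> \<preceq> x \<longleftrightarrow> x \<in> M"
  by (simp add: le_iff)

lemma le_mult_right: "x \<in> carrier G \<Longrightarrow> y \<in> M \<Longrightarrow> x \<preceq> x \<otimes> y"
  by (simp add: le_iff)

lemma Div_iff: "s \<in> Div G M b \<longleftrightarrow> s \<in> M \<and> s \<preceq> b"
  by (simp add: Div_def DivL_def)

lemma Div_iff_right: "balanced G M b \<Longrightarrow> s \<in> Div G M b \<longleftrightarrow> s \<in> M \<and> b \<otimes> inv s \<in> M"
  by (simp add: Div_def balanced_def DivR_def leR_def)

lemma balanced_in_M: "balanced G M b \<Longrightarrow> b \<in> M"
  by (simp add: balanced_def)

lemma one_in_Div: "balanced G M b \<Longrightarrow> \<one> \<in> Div G M b"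
  by (simp add: Div_iff le_iff balanced_in_M)

lemma self_in_Div: "balanced G M b \<Longrightarrow> b \<in> Div G M b"
  by (simp add: Div_iff balanced_in_M)

lemma Div_complement:
  assumes "balanced G M b" "s \<in> Div G M b"
  shows "inv s \<otimes> b \<in> Div G M b"
proof -
  have "s \<in> M" "inv s \<otimes> b \<in> M"
    using assms(2) by (simp_all add: Div_iff le_iff)
  moreover have "b \<otimes> inv (inv s \<otimes> b) = s"
    using calculation balanced_in_M[OF assms(1)] by (simp add: inv_mult_group m_assoc)
  ultimately show ?thesis
    by (simp add: Div_iff_right[OF assms(1)])
qed

lemma Div_complement_right:
  assumes "balanced G M b" "s \<in> Div G M b"
  shows "b \<otimes> inv s \<in> Div G M b"
proof -
  have "s \<in> M" "b \<otimes> inv s \<in> M"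
    using assms by (simp_all add: Div_iff_right[OF assms(1)])
  moreover have "inv (b \<otimes> inv s) \<otimes> b = s"
    using calculation balanced_in_M[OF assms(1)] by (simp add: inv_mult_group m_assoc)
  ultimately show ?thesis
    by (simp add: Div_iff le_iff)
qed

text \<open>Conjugation by a balanced element is the square of the complement map.\<close>

lemma Div_conj:
  assumes "balanced G M b" "s \<in> Div G M b"
  shows "inv b \<otimes> s \<otimes> b \<in> Div G M b"
proof -
  have "s \<in> carrier G" "b \<in> carrier G"
    using assms balanced_in_M by (auto simp: Div_iff)
  then have "inv b \<otimes> s \<otimes> b = inv (inv s \<otimes> b) \<otimes> b"
    by (simp add: inv_mult_group)
  then show ?thesis
    using Div_complement[OF assms(1) Div_complement[OF assms]] by simp
qed

lemma Div_conj_inv: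
  assumes "balanced G M b" "s \<in> Div G M b"
  shows "b \<otimes> s \<otimes> inv b \<in> Div G M b"
proof -
  have "s \<in> carrier G" "b \<in> carrier G"
    using assms balanced_in_M by (auto simp: Div_iff)
  then have "b \<otimes> s \<otimes> inv b = b \<otimes> inv (b \<otimes> inv s)"
    by (simp add: inv_mult_group m_assoc)
  then show ?thesis
    using Div_complement_right[OF assms(1) Div_complement_right[OF assms]] by simp
qed

lemma Div_left_divisor:
  assumes b: "balanced G M b" and "a \<in> M" "c \<in> Div G M b" "a \<preceq> c"
  shows "a \<in> Div G M b" and "inv a \<otimes> c \<in> Div G M b"
proof -
  have carrier: "a \<in> carrier G" "b \<in> carrier G" "c \<in> carrier G"
    using assms balanced_in_M[OF b] by (auto simp: Div_iff)
  have "c \<preceq> b"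
    using assms(3) by (simp add: Div_iff)
  then show "a \<in> Div G M b"
    using assms(2,4) carrier le_trans by (auto simp: Div_iff)
  have "inv a \<otimes> c \<preceq> inv a \<otimes> b"
    using \<open>c \<preceq> b\<close> carrier le_left_mult_iff by simp
  moreover have "inv a \<otimes> b \<preceq> b"
    using Div_complement[OF b \<open>a \<in> Div G M b\<close>] by (simp add: Div_iff)
  ultimately have "inv a \<otimes> c \<preceq> b"
    using carrier le_trans by (meson inv_closed m_closed)
  then show "inv a \<otimes> c \<in> Div G M b"
    using assms(4) by (simp add: Div_iff le_iff)
qed

lemma simple_in_M [simp]: "s \<in> simples \<Longrightarrow> s \<in> M"
  using Div_iff by blast

lemma simple_carrier [simp]: "s \<in> simples \<Longrightarrow> s \<in> carrier G"
  by simp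

lemma simples_subset_carrier: "simples \<subseteq> carrier G"
  by auto

lemma simple_le_Delta_iff: "s \<in> M \<Longrightarrow> s \<preceq> \<Delta> \<longleftrightarrow> s \<in> simples"
  using Div_iff by blast

lemma simple_le_Delta: "s \<in> simples \<Longrightarrow> s \<preceq> \<Delta>"
  using Div_iff by blast

lemma simple_complement_in_M: "s \<in> simples \<Longrightarrow> inv s \<otimes> \<Delta> \<in> M"
  using Div_iff le_iff by blast

lemma simple_right_complement_in_M: "s \<in> simples \<Longrightarrow> \<Delta> \<otimes> inv s \<in> M"
  using Div_iff_right[OF Delta_balanced] by blast

lemma Delta_in_M [simp]: "\<Delta> \<in> M"
  using balanced_in_M[OF Delta_balanced] .

lemma Delta_carrier [simp]: "\<Delta> \<in> carrier G"
  by simp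

lemma Delta_pow_in_M [simp]: "\<Delta> [^] (n::nat) \<in> M"
  by (induction n) auto

lemma Delta_pow_add: "\<Delta> [^] (a + b) = \<Delta> [^] (a::nat) \<otimes> \<Delta> [^] b"
  using nat_pow_mult[of \<Delta> a b] by simp

lemma Delta_pow_mult_Delta: "\<Delta> [^] (n::nat) \<otimes> \<Delta> = \<Delta> \<otimes> \<Delta> [^] n"
  using nat_pow_Suc2[of \<Delta> n] by simp

lemma M_conj_Delta: "x \<in> M \<Longrightarrow> inv \<Delta> \<otimes> x \<otimes> \<Delta> \<in> M"
  using mon_gen_conj_closed[OF simples_subset_carrier Delta_carrier] Div_conj[OF Delta_balanced]
  by (simp add: mon_gen_simples)

lemma M_conj_Delta_pow: "x \<in> M \<Longrightarrow> inv (\<Delta> [^] n) \<otimes> x \<otimes> \<Delta> [^] (n::nat) \<in> M"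
  by (rule conj_nat_pow_closed[OF M_subset_carrier Delta_carrier M_conj_Delta])

lemma M_conj_inv_Delta_pow:
  assumes "x \<in> M"
  shows "\<Delta> [^] n \<otimes> x \<otimes> inv (\<Delta> [^] (n::nat)) \<in> M"
proof -
  have "inv (inv \<Delta> [^] n) \<otimes> x \<otimes> inv \<Delta> [^] n \<in> M"
  proof (rule conj_nat_pow_closed[OF M_subset_carrier _ _ assms])
    show "inv (inv \<Delta>) \<otimes> y \<otimes> inv \<Delta> \<in> M" if "y \<in> M" for y
      using mon_gen_conj_closed[OF simples_subset_carrier, of "inv \<Delta>"] Div_conj_inv[OF Delta_balanced] that
      by (simp add: mon_gen_simples)
  qed simp
  then show ?thesis
    by (simp add: nat_pow_inv)
qed

lemma simple_conj_Delta_pow: "s \<in> simples \<Longrightarrow> inv (\<Delta> [^] n) \<otimes> s \<otimes> \<Delta> [^] (n::nat) \<in> simples"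
  by (rule conj_nat_pow_closed[OF simples_subset_carrier Delta_carrier Div_conj[OF Delta_balanced]])

lemma inv_Delta_pow_le_iff: "x \<in> carrier G \<Longrightarrow> inv (\<Delta> [^] (b::nat)) \<preceq> x \<longleftrightarrow> \<Delta> [^] b \<otimes> x \<in> M"
  by (simp add: le_iff)

lemma le_Delta_pow_mono:
  assumes "x \<in> carrier G" "x \<preceq> \<Delta> [^] a" "a \<le> (b::nat)"
  shows "x \<preceq> \<Delta> [^] b"
proof -
  have "\<Delta> [^] a \<preceq> \<Delta> [^] a \<otimes> \<Delta> [^] (b - a)"
    by (simp add: le_mult_right)
  then have "\<Delta> [^] a \<preceq> \<Delta> [^] b"
    using assms(3) by (simp flip: Delta_pow_add)
  then show ?thesis
    using assms(1,2) le_trans by simp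
qed

lemma inv_Delta_pow_le_mono:
  assumes "x \<in> carrier G" "inv (\<Delta> [^] a) \<preceq> x" "a \<le> (b::nat)"
  shows "inv (\<Delta> [^] b) \<preceq> x"
proof -
  have "\<Delta> [^] b = \<Delta> [^] (b - a) \<otimes> \<Delta> [^] a"
    using assms(3) by (simp flip: Delta_pow_add)
  then have "\<Delta> [^] b \<otimes> x = \<Delta> [^] (b - a) \<otimes> (\<Delta> [^] a \<otimes> x)"
    using assms(1) by (simp add: m_assoc)
  then show ?thesis
    using assms(1,2) by (simp add: inv_Delta_pow_le_iff)
qed

lemma M_lattice: "leL_lattice G M"
  using garside by (simp add: garside_structure_def)

definition meetL :: "'a \<Rightarrow> 'a \<Rightarrow> 'a" where
  "meetL x y = (SOME i. i \<in> carrier G \<and> i \<preceq> x \<and> i \<preceq> y \<and> (\<forall>u\<in>carrier G. u \<preceq> x \<and> u \<preceq> y \<longrightarrow> u \<preceq> i))"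

definition joinL :: "'a \<Rightarrow> 'a \<Rightarrow> 'a" where
  "joinL x y = (SOME j. j \<in> carrier G \<and> x \<preceq> j \<and> y \<preceq> j \<and> (\<forall>u\<in>carrier G. x \<preceq> u \<and> y \<preceq> u \<longrightarrow> j \<preceq> u))"

lemma
  assumes "x \<in> carrier G" "y \<in> carrier G"
  shows meetL_carrier: "meetL x y \<in> carrier G"
    and meetL_le_left: "meetL x y \<preceq> x"
    and meetL_le_right: "meetL x y \<preceq> y"
    and meetL_greatest: "\<And>u. u \<in> carrier G \<Longrightarrow> u \<preceq> x \<Longrightarrow> u \<preceq> y \<Longrightarrow> u \<preceq> meetL x y"
proof -
  have "\<forall>x\<in>carrier G. \<forall>y\<in>carrier G. \<exists>i\<in>carrier G. i \<preceq> x \<and> i \<preceq> y \<and>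
      (\<forall>u\<in>carrier G. u \<preceq> x \<and> u \<preceq> y \<longrightarrow> u \<preceq> i)"
    using M_lattice unfolding leL_lattice_def by (elim conjE)
  then have "\<exists>i. i \<in> carrier G \<and> i \<preceq> x \<and> i \<preceq> y \<and> (\<forall>u\<in>carrier G. u \<preceq> x \<and> u \<preceq> y \<longrightarrow> u \<preceq> i)"
    using assms by blast
  from someI_ex[OF this]
  show "meetL x y \<in> carrier G" "meetL x y \<preceq> x" "meetL x y \<preceq> y"
    "\<And>u. u \<in> carrier G \<Longrightarrow> u \<preceq> x \<Longrightarrow> u \<preceq> y \<Longrightarrow> u \<preceq> meetL x y"
    unfolding meetL_def by blast+
qed

lemma
  assumes "x \<in> carrier G" "y \<in> carrier G"
  shows joinL_carrier: "joinL x y \<in> carrier G"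
    and joinL_ge_left: "x \<preceq> joinL x y"
    and joinL_ge_right: "y \<preceq> joinL x y"
    and joinL_least: "\<And>u. u \<in> carrier G \<Longrightarrow> x \<preceq> u \<Longrightarrow> y \<preceq> u \<Longrightarrow> joinL x y \<preceq> u"
proof -
  have "\<forall>x\<in>carrier G. \<forall>y\<in>carrier G. \<exists>j\<in>carrier G. x \<preceq> j \<and> y \<preceq> j \<and>
      (\<forall>u\<in>carrier G. x \<preceq> u \<and> y \<preceq> u \<longrightarrow> j \<preceq> u)"
    using M_lattice unfolding leL_lattice_def by (elim conjE)
  then have "\<exists>j. j \<in> carrier G \<and> x \<preceq> j \<and> y \<preceq> j \<and> (\<forall>u\<in>carrier G. x \<preceq> u \<and> y \<preceq> u \<longrightarrow> j \<preceq> u)"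
    using assms by blast
  from someI_ex[OF this]
  show "joinL x y \<in> carrier G" "x \<preceq> joinL x y" "y \<preceq> joinL x y"
    "\<And>u. u \<in> carrier G \<Longrightarrow> x \<preceq> u \<Longrightarrow> y \<preceq> u \<Longrightarrow> joinL x y \<preceq> u"
    unfolding joinL_def by blast+
qed

lemma meetL_in_M: "x \<in> M \<Longrightarrow> y \<in> M \<Longrightarrow> meetL x y \<in> M"
  using meetL_greatest[of x y \<one>] meetL_carrier[of x y] by (simp add: one_le_iff)

definition head :: "'a \<Rightarrow> 'a" where
  "head x = meetL x \<Delta>"

lemma head_in_M [simp]: "x \<in> M \<Longrightarrow> head x \<in> M"
  unfolding head_def by (simp add: meetL_in_M)

lemma head_simple: "x \<in> M \<Longrightarrow> head x \<in> simples"
  unfolding head_def by (simp add: meetL_in_M meetL_le_right flip: simple_le_Delta_iff)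

lemma head_le: "x \<in> M \<Longrightarrow> head x \<preceq> x"
  unfolding head_def by (simp add: meetL_le_left)

lemma head_greatest: "x \<in> M \<Longrightarrow> u \<in> carrier G \<Longrightarrow> u \<preceq> x \<Longrightarrow> u \<preceq> \<Delta> \<Longrightarrow> u \<preceq> head x"
  unfolding head_def by (simp add: meetL_greatest)

lemma head_eq_Delta: "x \<in> M \<Longrightarrow> \<Delta> \<preceq> x \<Longrightarrow> head x = \<Delta>"
  using head_greatest[of x \<Delta>] head_simple[of x] le_antisym[of "head x" \<Delta>]
  by (simp flip: simple_le_Delta_iff)

lemma Delta_le_mult_Delta: "x \<in> M \<Longrightarrow> \<Delta> \<preceq> x \<otimes> \<Delta>"
  using M_conj_Delta by (simp add: le_iff m_assoc)

lemma le_mult_head: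
  assumes x: "x \<in> M" and y: "y \<in> M" and u: "u \<in> carrier G" "u \<preceq> \<Delta>" "u \<preceq> x \<otimes> y"
  shows "u \<preceq> x \<otimes> head y"
proof -
  define j where "j = joinL u x"
  have j: "j \<in> carrier G" "u \<preceq> j" "x \<preceq> j"
    unfolding j_def using x u by (simp_all add: joinL_carrier joinL_ge_left joinL_ge_right)
  have j_le_xy: "j \<preceq> x \<otimes> y"
    unfolding j_def using x y u by (simp add: joinL_least le_mult_right)
  have "u \<preceq> x \<otimes> \<Delta>"
    using u Delta_le_mult_Delta[OF x] le_trans[of u \<Delta> "x \<otimes> \<Delta>"] x by simp
  then have j_le_x_Delta: "j \<preceq> x \<otimes> \<Delta>"
    unfolding j_def using x u by (simp add: joinL_least le_mult_right)
  define c where "c = inv x \<otimes> j"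
  have c: "c \<in> M" "j = x \<otimes> c"
    using j x unfolding c_def by (simp_all add: le_iff)
  have "c \<preceq> y" "c \<preceq> \<Delta>"
    using j_le_xy j_le_x_Delta x y c by (simp_all add: le_left_mult_iff)
  then have "c \<preceq> head y"
    using y c by (simp add: head_greatest)
  then have "j \<preceq> x \<otimes> head y"
    using x y c by (simp add: le_left_mult_iff)
  then show ?thesis
    using j x y u le_trans[of u j "x \<otimes> head y"] by simp
qed

lemma head_mult:
  assumes x: "x \<in> M" and y: "y \<in> M"
  shows "head (x \<otimes> y) = head (x \<otimes> head y)"
proof (rule le_antisym)
  have "head (x \<otimes> y) \<preceq> x \<otimes> head y"
    using x y head_simple[of "x \<otimes> y"] head_le[of "x \<otimes> y"]
    by (intro le_mult_head) (simp_all flip: simple_le_Delta_iff)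
  then show "head (x \<otimes> y) \<preceq> head (x \<otimes> head y)"
    using x y head_simple[of "x \<otimes> y"] by (intro head_greatest) (simp_all flip: simple_le_Delta_iff)
  have "x \<otimes> head y \<preceq> x \<otimes> y"
    using x y head_le[OF y] by (simp add: le_left_mult_iff)
  then have "head (x \<otimes> head y) \<preceq> x \<otimes> y"
    using x y head_le[of "x \<otimes> head y"] le_trans[of _ "x \<otimes> head y" "x \<otimes> y"] by simp
  then show "head (x \<otimes> head y) \<preceq> head (x \<otimes> y)"
    using x y head_simple[of "x \<otimes> head y"] by (intro head_greatest) (simp_all flip: simple_le_Delta_iff)
qed (use x y in \<open>simp_all only: head_in_M M_carrier M_mult_closed\<close>)

lemma le_Delta_pow_Suc_head:
  assumes x: "x \<in> M" and le: "x \<preceq> \<Delta> [^] Suc n"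
  shows "inv (head x) \<otimes> x \<preceq> \<Delta> [^] n"
proof -
  define t where "t = \<Delta> [^] Suc n \<otimes> inv x"
  have "\<Delta> [^] Suc n \<otimes> (inv x \<otimes> \<Delta> [^] Suc n) \<otimes> inv (\<Delta> [^] Suc n) \<in> M"
    using M_conj_inv_Delta_pow le unfolding le_iff by blast
  moreover have "\<Delta> [^] Suc n \<otimes> (inv x \<otimes> \<Delta> [^] Suc n) \<otimes> inv (\<Delta> [^] Suc n) = t"
    unfolding t_def using x by (simp add: m_assoc del: nat_pow_Suc)
  ultimately have t: "t \<in> M"
    by (simp only:)
  have tx: "t \<otimes> x = \<Delta> \<otimes> \<Delta> [^] n"
    unfolding t_def using x by (simp add: m_assoc Delta_pow_mult_Delta)
  define s where "s = head x"
  have s: "s \<in> simples"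
    unfolding s_def using head_simple[OF x] .
  \<comment> \<open>since \<open>t x = \<Delta>\<^bsup>n+1\<^esup>\<close>, \<open>head_mult\<close> forces \<open>\<Delta> \<preceq> t s\<close>, so one factor \<open>\<Delta>\<close> cancels\<close>
  have "head (t \<otimes> s) = \<Delta>"
    using head_mult[OF t x] head_eq_Delta[of "t \<otimes> x"] t x tx
    by (simp add: le_mult_right s_def)
  then have "\<Delta> \<preceq> t \<otimes> s"
    using head_le[of "t \<otimes> s"] t s by simp
  then have r: "inv \<Delta> \<otimes> (t \<otimes> s) \<in> M"
    by (simp add: le_iff)
  have "inv s \<otimes> x = inv (inv \<Delta> \<otimes> (t \<otimes> s)) \<otimes> \<Delta> [^] n"
    using t s x tx by (simp add: m_assoc inv_mult_group flip: tx)
  then have "inv (inv s \<otimes> x) \<otimes> \<Delta> [^] n = inv (\<Delta> [^] n) \<otimes> (inv \<Delta> \<otimes> (t \<otimes> s)) \<otimes> \<Delta> [^] n"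
    using t s by (simp add: m_assoc inv_mult_group)
  then show ?thesis
    using M_conj_Delta_pow[OF r, of n] by (simp add: le_iff s_def)
qed

lemma le_Delta_pow_simple_product:
  "x \<in> M \<Longrightarrow> x \<preceq> \<Delta> [^] (n::nat) \<Longrightarrow> \<exists>xs. length xs = n \<and> set xs \<subseteq> simples \<and> lprod G xs = x"
proof (induction n arbitrary: x)
  case 0
  then have "x = \<one>"
    using M_pointed by (simp add: le_iff)
  then show ?case by simp
next
  case (Suc n)
  define s where "s = head x"
  have "inv s \<otimes> x \<in> M" "inv s \<otimes> x \<preceq> \<Delta> [^] n"
    using head_le Suc.prems le_Delta_pow_Suc_head unfolding s_def by (simp_all add: le_iff)
  then obtain xs where "length xs = n" "set xs \<subseteq> simples" "lprod G xs = inv s \<otimes> x"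
    using Suc.IH by blast
  moreover have "s \<in> simples"
    unfolding s_def using head_simple Suc.prems(1) .
  ultimately show ?case
    using Suc.prems(1) by (intro exI[of _ "s # xs"]) simp
qed

lemma finite_le_Delta_pow: "finite {x \<in> M. x \<preceq> \<Delta> [^] (n::nat)}"
proof (rule finite_surj)
  show "finite {xs. set xs \<subseteq> simples \<and> length xs = n}"
    using finite_lists_length_eq[OF finite_simples] .
  show "{x \<in> M. x \<preceq> \<Delta> [^] n} \<subseteq> lprod G ` {xs. set xs \<subseteq> simples \<and> length xs = n}"
    using le_Delta_pow_simple_product by blast
qed

lemma simple_mult_le_Delta_pow:
  assumes "s \<in> simples" "y \<in> carrier G" "y \<preceq> \<Delta> [^] (n::nat)"
  shows "s \<otimes> y \<preceq> \<Delta> [^] Suc n"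
proof -
  have "inv (s \<otimes> y) \<otimes> \<Delta> [^] Suc n = (inv y \<otimes> \<Delta> [^] n) \<otimes> (inv (\<Delta> [^] n) \<otimes> (inv s \<otimes> \<Delta>) \<otimes> \<Delta> [^] n)"
    using assms by (simp add: m_assoc inv_mult_group Delta_pow_mult_Delta)
  then show ?thesis
    using assms M_conj_Delta_pow[OF simple_complement_in_M, of s n] by (simp add: le_iff)
qed

lemma inv_simple_mult_le_Delta_pow:
  assumes "s \<in> simples" "y \<in> carrier G" "y \<preceq> \<Delta> [^] (n::nat)"
  shows "inv s \<otimes> y \<preceq> \<Delta> [^] n"
proof -
  have "inv (inv s \<otimes> y) \<otimes> \<Delta> [^] n = (inv y \<otimes> \<Delta> [^] n) \<otimes> (inv (\<Delta> [^] n) \<otimes> s \<otimes> \<Delta> [^] n)"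
    using assms by (simp add: m_assoc inv_mult_group)
  then show ?thesis
    using assms M_conj_Delta_pow[of s n] by (simp add: le_iff)
qed

lemma simple_mult_ge_inv_Delta_pow:
  assumes "s \<in> simples" "y \<in> carrier G" "inv (\<Delta> [^] (b::nat)) \<preceq> y"
  shows "inv (\<Delta> [^] b) \<preceq> s \<otimes> y"
proof -
  have "\<Delta> [^] b \<otimes> (s \<otimes> y) = (\<Delta> [^] b \<otimes> s \<otimes> inv (\<Delta> [^] b)) \<otimes> (\<Delta> [^] b \<otimes> y)"
    using assms by (simp add: m_assoc)
  then show ?thesis
    using assms M_conj_inv_Delta_pow[of s b] by (simp add: inv_Delta_pow_le_iff)
qed

lemma inv_simple_mult_ge_inv_Delta_pow:
  assumes "s \<in> simples" "y \<in> carrier G" "inv (\<Delta> [^] (b::nat)) \<preceq> y"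
  shows "inv (\<Delta> [^] Suc b) \<preceq> inv s \<otimes> y"
proof -
  have "\<Delta> [^] Suc b \<otimes> (inv s \<otimes> y) = (\<Delta> [^] b \<otimes> (\<Delta> \<otimes> inv s) \<otimes> inv (\<Delta> [^] b)) \<otimes> (\<Delta> [^] b \<otimes> y)"
    using assms(1,2) by (simp add: m_assoc)
  then show ?thesis
    using assms M_conj_inv_Delta_pow[OF simple_right_complement_in_M, of s b]
      inv_Delta_pow_le_iff[of "inv s \<otimes> y" "Suc b"] inv_Delta_pow_le_iff[of y b]
    by simp
qed

lemma mult_Delta_pow_in_M:
  "x \<in> carrier G \<Longrightarrow> inv (\<Delta> [^] (b::nat)) \<preceq> x \<Longrightarrow> x \<otimes> \<Delta> [^] b \<in> M"
  using M_conj_Delta_pow[of "\<Delta> [^] b \<otimes> x" b] by (simp add: inv_Delta_pow_le_iff m_assoc)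

lemma mult_Delta_pow_le:
  assumes "x \<in> carrier G" "x \<preceq> \<Delta> [^] (a::nat)"
  shows "x \<otimes> \<Delta> [^] b \<preceq> \<Delta> [^] (a + b)"
proof -
  have "inv (x \<otimes> \<Delta> [^] b) \<otimes> \<Delta> [^] (a + b) = inv (\<Delta> [^] b) \<otimes> (inv x \<otimes> \<Delta> [^] a) \<otimes> \<Delta> [^] b"
    using assms(1) by (simp add: m_assoc inv_mult_group Delta_pow_add)
  then show ?thesis
    using M_conj_Delta_pow assms(2) by (simp add: le_iff)
qed

lemma mult_inv_Delta_pow_in_interval:
  assumes "y \<in> M" "y \<preceq> \<Delta> [^] (a + b)"
  shows "inv (\<Delta> [^] b) \<preceq> y \<otimes> inv (\<Delta> [^] (b::nat))" and "y \<otimes> inv (\<Delta> [^] b) \<preceq> \<Delta> [^] (a::nat)"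
proof -
  show "inv (\<Delta> [^] b) \<preceq> y \<otimes> inv (\<Delta> [^] b)"
    using M_conj_inv_Delta_pow[OF assms(1)] assms(1) by (simp add: inv_Delta_pow_le_iff m_assoc)
  have "inv (y \<otimes> inv (\<Delta> [^] b)) \<otimes> \<Delta> [^] a =
      \<Delta> [^] b \<otimes> (inv y \<otimes> \<Delta> [^] (a + b)) \<otimes> inv (\<Delta> [^] b)"
    using assms(1) by (simp add: m_assoc inv_mult_group Delta_pow_add)
  then show "y \<otimes> inv (\<Delta> [^] b) \<preceq> \<Delta> [^] a"
    using M_conj_inv_Delta_pow assms(2) by (simp add: le_iff)
qed

abbreviation nontrivial_simples :: "'a set" where
  "nontrivial_simples \<equiv> simples - {\<one>}"

abbreviation letters :: "'a set" where
  "letters \<equiv> nontrivial_simples \<union> (\<lambda>s. inv s) ` nontrivial_simples"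

lemma letters_subset_carrier: "letters \<subseteq> carrier G"
  by auto

lemma word_in_Delta_interval:
  "set xs \<subseteq> letters \<Longrightarrow>
    \<exists>a b. a + b = length xs \<and> inv (\<Delta> [^] b) \<preceq> lprod G xs \<and> lprod G xs \<preceq> \<Delta> [^] a"
proof (induction xs)
  case Nil
  then show ?case
    by (intro exI[of _ 0]) (simp add: le_iff)
next
  case (Cons z xs)
  then obtain a b where ab: "a + b = length xs" "inv (\<Delta> [^] b) \<preceq> lprod G xs" "lprod G xs \<preceq> \<Delta> [^] a"
    by auto
  have "set xs \<subseteq> carrier G"
    using Cons.prems letters_subset_carrier by auto
  then have xs: "lprod G xs \<in> carrier G"
    by simp
  show ?case
  proof (cases "z \<in> nontrivial_simples")
    case True
    then show ?thesis
      using ab xs simple_mult_ge_inv_Delta_pow simple_mult_le_Delta_pow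
      by (intro exI[of _ "Suc a"] exI[of _ b]) auto
  next
    case False
    then obtain s where "s \<in> simples" "z = inv s"
      using Cons.prems by auto
    then show ?thesis
      using ab xs inv_simple_mult_ge_inv_Delta_pow inv_simple_mult_le_Delta_pow
      by (intro exI[of _ a] exI[of _ "Suc b"]) auto
  qed
qed

lemma word_exists: "x \<in> carrier G \<Longrightarrow> \<exists>xs. set xs \<subseteq> letters \<and> lprod G xs = x"
  unfolding generate_simples[symmetric]
proof (induction rule: generate.induct)
  case one
  then show ?case
    by (intro exI[of _ "[]"]) simp
next
  case (incl s)
  show ?case
  proof (cases "s = \<one>")
    case True
    then show ?thesis by (intro exI[of _ "[]"]) simp
  next
    case False
    then show ?thesis using incl by (intro exI[of _ "[s]"]) auto
  qed
next
  case (inv s)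
  show ?case
  proof (cases "s = \<one>")
    case True
    then show ?thesis by (intro exI[of _ "[]"]) simp
  next
    case False
    then show ?thesis using inv by (intro exI[of _ "[inv s]"]) auto
  qed
next
  case (eng x y)
  then obtain xs ys where "set xs \<subseteq> letters" "lprod G xs = x" "set ys \<subseteq> letters" "lprod G ys = y"
    by blast
  moreover have "set xs \<subseteq> carrier G" "set ys \<subseteq> carrier G"
    using calculation by auto
  ultimately show ?case
    by (intro exI[of _ "xs @ ys"]) (simp add: lprod_append)
qed

lemma inv_Delta_pow_mult_simple_product:
  "set ys \<subseteq> simples \<Longrightarrow> \<exists>zs. set zs \<subseteq> (\<lambda>s. inv s) ` simples \<and> length zs = length ys \<and>
    lprod G zs = inv (\<Delta> [^] length ys) \<otimes> lprod G ys"
proof (induction ys)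
  case Nil
  then show ?case by simp
next
  case (Cons s ys)
  then obtain zs where zs: "set zs \<subseteq> (\<lambda>s. inv s) ` simples" "length zs = length ys"
    "lprod G zs = inv (\<Delta> [^] length ys) \<otimes> lprod G ys"
    by auto
  define s' where "s' = inv (\<Delta> [^] length ys) \<otimes> s \<otimes> \<Delta> [^] length ys"
  have "s' \<in> simples"
    unfolding s'_def using Cons.prems simple_conj_Delta_pow by simp
  then have "inv (inv s' \<otimes> \<Delta>) \<in> (\<lambda>s. inv s) ` simples"
    using Div_complement[OF Delta_balanced] by blast
  moreover have "inv (\<Delta> [^] Suc (length ys)) \<otimes> lprod G (s # ys) =
      inv (inv s' \<otimes> \<Delta>) \<otimes> (inv (\<Delta> [^] length ys) \<otimes> lprod G ys)"
    unfolding s'_def using Cons.prems simples_subset_carrier by (auto simp: m_assoc inv_mult_group)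
  ultimately show ?case
    using zs by (intro exI[of _ "inv (inv s' \<otimes> \<Delta>) # zs"]) simp
qed

lemma word_from_Delta_interval:
  assumes x: "x \<in> carrier G" and lo: "inv (\<Delta> [^] b) \<preceq> x" and hi: "x \<preceq> \<Delta> [^] (a::nat)"
  shows "\<exists>xs. set xs \<subseteq> letters \<and> length xs \<le> a + b \<and> lprod G xs = x"
proof -
  define m where "m = \<Delta> [^] b \<otimes> x"
  have m: "m \<in> M"
    unfolding m_def using lo x by (simp add: inv_Delta_pow_le_iff)
  have "inv m \<otimes> \<Delta> [^] (b + a) = inv x \<otimes> \<Delta> [^] a"
    unfolding m_def using x by (simp add: Delta_pow_add m_assoc inv_mult_group)
  then have "m \<preceq> \<Delta> [^] (b + a)"
    using hi by (simp add: le_iff)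
  then obtain ys where ys: "length ys = b + a" "set ys \<subseteq> simples" "lprod G ys = m"
    using le_Delta_pow_simple_product m by blast
  \<comment> \<open>trade the first \<open>b\<close> simple factors for \<open>b\<close> inverse simple factors absorbing \<open>\<Delta>\<^bsup>-b\<^esup>\<close>\<close>
  obtain zs where zs: "set zs \<subseteq> (\<lambda>s. inv s) ` simples" "length zs = b"
    "lprod G zs = inv (\<Delta> [^] b) \<otimes> lprod G (take b ys)"
    using inv_Delta_pow_mult_simple_product[of "take b ys"] ys(1,2) set_take_subset[of b ys] by auto
  have carrier: "set zs \<subseteq> carrier G" "set (take b ys) \<subseteq> carrier G" "set (drop b ys) \<subseteq> carrier G"
    using zs(1) ys(2) set_take_subset[of b ys] set_drop_subset[of b ys] by auto
  have "lprod G (zs @ drop b ys) = inv (\<Delta> [^] b) \<otimes> lprod G ys"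
    using carrier zs(3) lprod_append[of "take b ys" "drop b ys"] by (simp add: lprod_append m_assoc)
  also have "\<dots> = x"
    using x by (simp add: ys(3) m_def)
  finally have "lprod G (filter (\<lambda>z. z \<noteq> \<one>) (zs @ drop b ys)) = x"
    using carrier lprod_filter_one[of "zs @ drop b ys"] by (simp del: filter_append)
  moreover have "set (filter (\<lambda>z. z \<noteq> \<one>) (zs @ drop b ys)) \<subseteq> letters"
    using zs(1) ys(2) set_drop_subset[of b ys] by auto
  moreover have "length (filter (\<lambda>z. z \<noteq> \<one>) (zs @ drop b ys)) \<le> a + b"
    using zs(2) ys(1) length_filter_le[of "\<lambda>z. z \<noteq> \<one>" "zs @ drop b ys"] by simp
  ultimately show ?thesis
    by blast
qed

lemma word_length_le_iff_Delta_interval: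
  assumes x: "x \<in> carrier G"
  shows "word_length G nontrivial_simples x \<le> n \<longleftrightarrow>
    (\<exists>b\<le>n. inv (\<Delta> [^] b) \<preceq> x \<and> x \<preceq> \<Delta> [^] (n - b))"
proof
  assume "word_length G nontrivial_simples x \<le> n"
  then obtain xs where xs: "set xs \<subseteq> letters" "length xs \<le> n" "lprod G xs = x"
    using word_length_le_iff[of nontrivial_simples G x n] word_exists[OF x] by blast
  then obtain a b where "a + b = length xs" "inv (\<Delta> [^] b) \<preceq> x" "x \<preceq> \<Delta> [^] a"
    using word_in_Delta_interval by blast
  then show "\<exists>b\<le>n. inv (\<Delta> [^] b) \<preceq> x \<and> x \<preceq> \<Delta> [^] (n - b)"
    using xs(2) x le_Delta_pow_mono[of x a "n - b"] by (intro exI[of _ b]) auto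
next
  assume "\<exists>b\<le>n. inv (\<Delta> [^] b) \<preceq> x \<and> x \<preceq> \<Delta> [^] (n - b)"
  then obtain b where "b \<le> n" "inv (\<Delta> [^] b) \<preceq> x" "x \<preceq> \<Delta> [^] (n - b)"
    by blast
  moreover from calculation obtain xs where "set xs \<subseteq> letters" "length xs \<le> n - b + b" "lprod G xs = x"
    using word_from_Delta_interval[OF x] by blast
  ultimately show "word_length G nontrivial_simples x \<le> n"
    using word_length_le_iff[of nontrivial_simples G x n] by auto
qed

subsection \<open>The head automaton\<close>

definition head_count :: "nat \<Rightarrow> 'a \<Rightarrow> nat" where
  "head_count w s = card {x \<in> M. x \<preceq> \<Delta> [^] w \<and> head x = s}"

text \<open>An element below \<open>\<Delta>\<^bsup>w+1\<^esup>\<close> with head \<open>s\<close> is \<open>s x'\<close> with \<open>x'\<close> below \<open>\<Delta>\<^bsup>w\<^esup>\<close>, and by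
  \<open>head_mult\<close> whether \<open>s\<close> may precede \<open>x'\<close> only depends on the head of \<open>x'\<close>: the
  counts obey a linear recurrence indexed by the finite set of simple elements.\<close>

lemma le_Delta_pow_Suc_head_eq:
  assumes s: "s \<in> simples"
  shows "{x \<in> M. x \<preceq> \<Delta> [^] Suc w \<and> head x = s} =
    (\<lambda>x'. s \<otimes> x') ` {x' \<in> M. x' \<preceq> \<Delta> [^] w \<and> head (s \<otimes> head x') = s}"
proof (intro equalityI subsetI)
  fix x assume x: "x \<in> {x \<in> M. x \<preceq> \<Delta> [^] Suc w \<and> head x = s}"
  define x' where "x' = inv s \<otimes> x"
  have "x' \<in> M" "x' \<preceq> \<Delta> [^] w"
    unfolding x'_def using x head_le le_Delta_pow_Suc_head by (auto simp: le_iff)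
  moreover have "head (s \<otimes> head x') = s" "x = s \<otimes> x'"
    using head_mult[OF simple_in_M[OF s] \<open>x' \<in> M\<close>] x s unfolding x'_def by auto
  ultimately show "x \<in> (\<lambda>x'. s \<otimes> x') ` {x' \<in> M. x' \<preceq> \<Delta> [^] w \<and> head (s \<otimes> head x') = s}"
    by blast
next
  fix x assume "x \<in> (\<lambda>x'. s \<otimes> x') ` {x' \<in> M. x' \<preceq> \<Delta> [^] w \<and> head (s \<otimes> head x') = s}"
  then obtain x' where x': "x' \<in> M" "x' \<preceq> \<Delta> [^] w" "head (s \<otimes> head x') = s" "x = s \<otimes> x'"
    by blast
  then show "x \<in> {x \<in> M. x \<preceq> \<Delta> [^] Suc w \<and> head x = s}"
    using simple_mult_le_Delta_pow[OF s] head_mult[OF simple_in_M[OF s] x'(1)] s by simp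
qed

lemma head_count_Suc:
  assumes s: "s \<in> simples"
  shows "head_count (Suc w) s = (\<Sum>s'\<in>simples. (if head (s \<otimes> s') = s then 1 else 0) * head_count w s')"
proof -
  let ?B = "{x' \<in> M. x' \<preceq> \<Delta> [^] w \<and> head (s \<otimes> head x') = s}"
  have fin: "finite {x \<in> M. x \<preceq> \<Delta> [^] w \<and> P x}" for P
    using finite_le_Delta_pow by (rule rev_finite_subset) blast
  have "inj_on (\<lambda>x'. s \<otimes> x') ?B"
    using s by (intro inj_onI) simp
  then have "head_count (Suc w) s = card ?B"
    unfolding head_count_def le_Delta_pow_Suc_head_eq[OF s] by (rule card_image)
  also have "?B = (\<Union>s'\<in>{s' \<in> simples. head (s \<otimes> s') = s}. {x \<in> M. x \<preceq> \<Delta> [^] w \<and> head x = s'})"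
    using head_simple by auto
  also have "card \<dots> = (\<Sum>s'\<in>{s' \<in> simples. head (s \<otimes> s') = s}. head_count w s')"
    unfolding head_count_def using finite_simples fin by (subst card_UN_disjoint) auto
  also have "\<dots> = (\<Sum>s'\<in>simples. if head (s \<otimes> s') = s then head_count w s' else 0)"
    using sum.inter_filter[OF finite_simples] by simp
  also have "\<dots> = (\<Sum>s'\<in>simples. (if head (s \<otimes> s') = s then 1 else 0) * head_count w s')"
    by (rule sum.cong) simp_all
  finally show ?thesis .
qed

end

section \<open>Parabolic substructures\<close>

locale parabolic = garside +
  fixes H N :: "'a set" and \<delta> :: 'a
  assumes parabolic: "parabolic_substructure G M \<Delta> H N \<delta>"
begin

abbreviation simples\<^sub>\<delta> :: "'a set" where
  "simples\<^sub>\<delta> \<equiv> Div G M \<delta>"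

lemma delta_balanced: "balanced G M \<delta>"
  using parabolic unfolding parabolic_substructure_def by (elim conjE)

lemma H_eq: "H = generate G simples\<^sub>\<delta>"
  using parabolic unfolding parabolic_substructure_def by (elim conjE)

lemma N_eq: "N = mon_gen G simples\<^sub>\<delta>"
  using parabolic unfolding parabolic_substructure_def by (elim conjE)

lemma delta_simples_eq: "simples\<^sub>\<delta> = simples \<inter> N"
  using parabolic unfolding parabolic_substructure_def by (elim conjE)

lemma delta_in_M [simp]: "\<delta> \<in> M"
  using balanced_in_M[OF delta_balanced] .

lemma delta_simple_in_M [simp]: "u \<in> simples\<^sub>\<delta> \<Longrightarrow> u \<in> M"
  using Div_iff by blast

lemma delta_simples_subset_carrier: "simples\<^sub>\<delta> \<subseteq> carrier G"
  by auto

lemma delta_simple_in_N: "u \<in> simples\<^sub>\<delta> \<Longrightarrow> u \<in> N"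
  using delta_simples_eq by blast

lemma delta_simple_simple: "u \<in> simples\<^sub>\<delta> \<Longrightarrow> u \<in> simples"
  using delta_simples_eq by blast

lemma submonoid_N: "submonoid N G"
  unfolding N_eq using mon_gen_submonoid[OF delta_simples_subset_carrier] .

lemma N_subset_M: "N \<subseteq> M"
  unfolding N_eq by (rule mon_gen_subset_submonoid[OF submonoid_M]) auto

lemma N_in_M [simp]: "n \<in> N \<Longrightarrow> n \<in> M"
  using N_subset_M by blast

lemma one_in_N [simp]: "\<one> \<in> N"
  using submonoid.one_closed[OF submonoid_N] .

lemma N_mult_closed [simp]: "x \<in> N \<Longrightarrow> y \<in> N \<Longrightarrow> x \<otimes> y \<in> N"
  using submonoid.m_closed[OF submonoid_N] .

lemma subgroup_H: "subgroup H G"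
  unfolding H_eq using generate_is_subgroup[OF delta_simples_subset_carrier] .

lemma H_subset_carrier: "H \<subseteq> carrier G"
  using subgroup.subset[OF subgroup_H] .

lemma N_subset_H: "N \<subseteq> H"
  unfolding N_eq H_eq using mon_gen_subset_generate[OF delta_simples_subset_carrier] .

lemma N_elem_product: "n \<in> N \<Longrightarrow> \<exists>us. set us \<subseteq> simples\<^sub>\<delta> \<and> lprod G us = n"
  unfolding N_eq mon_gen_def by blast

lemma delta_pow_in_N [simp]: "\<delta> [^] (k::nat) \<in> N"
  by (induction k) (simp_all add: delta_simple_in_N self_in_Div[OF delta_balanced])

lemma N_conj_delta: "n \<in> N \<Longrightarrow> inv \<delta> \<otimes> n \<otimes> \<delta> \<in> N"
  unfolding N_eq using mon_gen_conj_closed[OF delta_simples_subset_carrier] Div_conj[OF delta_balanced]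
  by simp

lemma N_conj_delta_pow: "n \<in> N \<Longrightarrow> inv (\<delta> [^] k) \<otimes> n \<otimes> \<delta> [^] (k::nat) \<in> N"
  using N_subset_M by (intro conj_nat_pow_closed N_conj_delta) auto

lemma H_elem_decomp: "h \<in> H \<Longrightarrow> \<exists>n k. n \<in> N \<and> h = n \<otimes> inv (\<delta> [^] (k::nat))"
  unfolding H_eq
proof (induction rule: generate.induct)
  case one
  then show ?case
    by (intro exI[of _ \<one>] exI[of _ 0]) simp
next
  case (incl u)
  then show ?case
    by (intro exI[of _ u] exI[of _ 0]) (simp add: delta_simple_in_N)
next
  case (inv u)
  then have "inv u \<otimes> \<delta> \<in> N"
    using Div_complement[OF delta_balanced] delta_simple_in_N by blast
  then show ?case
    using inv by (intro exI[of _ "inv u \<otimes> \<delta>"] exI[of _ 1]) (simp add: m_assoc)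
next
  case (eng h1 h2)
  then obtain n1 k1 n2 k2 where n: "n1 \<in> N" "h1 = n1 \<otimes> inv (\<delta> [^] (k1::nat))"
    "n2 \<in> N" "h2 = n2 \<otimes> inv (\<delta> [^] (k2::nat))"
    by blast
  \<comment> \<open>move \<open>\<delta>\<^bsup>-k1\<^esup>\<close> to the right past \<open>n2\<close>, conjugating it\<close>
  have "h1 \<otimes> h2 = (n1 \<otimes> (inv (\<delta> [^] k1) \<otimes> n2 \<otimes> \<delta> [^] k1)) \<otimes> inv (\<delta> [^] (k2 + k1))"
    using n by (simp add: m_assoc inv_mult_group nat_pow_mult[symmetric])
  then show ?case
    using n N_conj_delta_pow[of n2 k1]
    by (intro exI[of _ "n1 \<otimes> (inv (\<delta> [^] k1) \<otimes> n2 \<otimes> \<delta> [^] k1)"] exI[of _ "k2 + k1"]) simp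
qed

lemma simple_left_divisor_of_N:
  "set us \<subseteq> simples\<^sub>\<delta> \<Longrightarrow> a \<in> simples \<Longrightarrow> a \<preceq> lprod G us \<Longrightarrow>
    a \<in> simples\<^sub>\<delta> \<and> inv a \<otimes> lprod G us \<in> N"
proof (induction us arbitrary: a)
  case Nil
  then have "a \<in> M" "inv a \<in> M"
    by (simp_all add: le_iff)
  then have "a = \<one>"
    by (rule M_pointed)
  then show ?case
    by (simp add: one_in_Div[OF delta_balanced])
next
  case (Cons u us)
  define q where "q = lprod G us"
  have u: "u \<in> simples\<^sub>\<delta>" "u \<in> simples"
    using Cons.prems(1) delta_simple_simple by auto
  have q: "q \<in> N"
    unfolding q_def N_eq using Cons.prems(1) lprod_in_mon_gen by auto
  have a: "a \<in> M" "a \<preceq> u \<otimes> q"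
    using Cons.prems(2,3) unfolding q_def by simp_all
  \<comment> \<open>\<open>c = a \<or> u\<close> is simple and \<open>u\<^sup>-\<^sup>1 c\<close> is a simple left divisor of \<open>q\<close>: induct on it\<close>
  define c where "c = joinL a u"
  have c: "c \<in> carrier G" "a \<preceq> c" "u \<preceq> c"
    unfolding c_def using a u by (simp_all add: joinL_carrier joinL_ge_left joinL_ge_right)
  have c_le: "c \<preceq> u \<otimes> q"
    unfolding c_def using a u q by (simp add: joinL_least le_mult_right)
  have c_simple: "c \<in> simples"
  proof -
    have "c \<preceq> \<Delta>"
      unfolding c_def using a u Cons.prems(2) by (simp add: joinL_least simple_le_Delta)
    moreover have "c \<in> M"
      using c u M_mult_closed[of u "inv u \<otimes> c"] by (simp add: le_iff)
    ultimately show ?thesis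
      by (simp add: simple_le_Delta_iff)
  qed
  define c' where "c' = inv u \<otimes> c"
  have c'_simple: "c' \<in> simples"
    unfolding c'_def using Div_left_divisor(2)[OF Delta_balanced _ c_simple c(3)] u by simp
  have c_eq: "c = u \<otimes> c'"
    unfolding c'_def using c u by simp
  have "c' \<preceq> q"
    using c_le le_left_mult_iff[of u c' q] c_eq c'_simple u q by simp
  then have IH: "c' \<in> N" "inv c' \<otimes> q \<in> N"
    using Cons.IH[OF _ c'_simple] Cons.prems(1) delta_simple_in_N unfolding q_def by auto
  have "c \<in> simples\<^sub>\<delta>"
    using c_simple c_eq IH(1) delta_simple_in_N[OF u(1)] delta_simples_eq by auto
  then have "a \<in> simples\<^sub>\<delta>" "inv a \<otimes> c \<in> simples\<^sub>\<delta>"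
    using Div_left_divisor[OF delta_balanced a(1) _ c(2)] by auto
  moreover have "inv a \<otimes> (u \<otimes> q) = (inv a \<otimes> c) \<otimes> (inv c' \<otimes> q)"
    using c_eq a u q c'_simple by (simp add: m_assoc inv_mult_group)
  ultimately show ?case
    using IH(2) delta_simple_in_N unfolding q_def by simp
qed

lemma N_left_divisor:
  assumes "x \<in> M" "p \<in> N" "x \<preceq> p"
  shows "x \<in> N" and "inv x \<otimes> p \<in> N"
proof -
  obtain xs where xs: "set xs \<subseteq> simples" "lprod G xs = x"
    using M_elem_simple_product[OF assms(1)] by blast
  have "\<And>p. p \<in> N \<Longrightarrow> lprod G xs \<preceq> p \<Longrightarrow> lprod G xs \<in> N \<and> inv (lprod G xs) \<otimes> p \<in> N"
    using xs(1)
  proof (induction xs)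
    case Nil
    then show ?case by simp
  next
    case (Cons a xs)
    define r where "r = lprod G xs"
    have a: "a \<in> simples" and "set xs \<subseteq> M"
      using Cons.prems(3) by auto
    then have r: "r \<in> M"
      unfolding r_def using lprod_in_submonoid[OF submonoid_M] by blast
    have p: "p \<in> M" "a \<otimes> r \<preceq> p"
      using Cons.prems(1,2) unfolding r_def by simp_all
    obtain us where us: "set us \<subseteq> simples\<^sub>\<delta>" "lprod G us = p"
      using N_elem_product[OF Cons.prems(1)] by blast
    have "a \<preceq> p"
      using le_mult_right[of a r] p a r le_trans[of a "a \<otimes> r" p] by simp
    then have "a \<in> N" "inv a \<otimes> p \<in> N"
      using simple_left_divisor_of_N[OF us(1) a] us(2) delta_simple_in_N by auto
    moreover have "r \<preceq> inv a \<otimes> p"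
      using p a r le_left_mult_iff[of a r "inv a \<otimes> p"] by simp
    ultimately have "r \<in> N" "inv r \<otimes> (inv a \<otimes> p) \<in> N"
      using Cons.IH Cons.prems(3) unfolding r_def by auto
    moreover have "inv (a \<otimes> r) \<otimes> p = inv r \<otimes> (inv a \<otimes> p)"
      using a r p by (simp add: m_assoc inv_mult_group)
    ultimately show ?case
      using \<open>a \<in> N\<close> unfolding r_def by simp
  qed
  then show "x \<in> N" "inv x \<otimes> p \<in> N"
    using assms xs(2) by auto
qed

subsection \<open>Reduced elements\<close>

definition reduced :: "'a \<Rightarrow> bool" where
  "reduced x \<longleftrightarrow> (\<forall>u\<in>simples\<^sub>\<delta>. u \<preceq> x \<longrightarrow> u = \<one>)"

lemma reduced_N_le_imp_one:
  assumes x: "reduced x" "x \<in> carrier G" and n: "n \<in> N" "n \<preceq> x"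
  shows "n = \<one>"
proof -
  obtain us where us: "set us \<subseteq> simples\<^sub>\<delta>" "lprod G us = n"
    using N_elem_product[OF n(1)] by blast
  have "lprod G us \<preceq> x \<Longrightarrow> lprod G us = \<one>"
    using us(1)
  proof (induction us)
    case Nil
    then show ?case by simp
  next
    case (Cons u us)
    have u: "u \<in> simples\<^sub>\<delta>" and "set us \<subseteq> M"
      using Cons.prems(2) by auto
    then have r: "lprod G us \<in> M"
      using lprod_in_submonoid[OF submonoid_M] by blast
    then have "u \<preceq> x"
      using Cons.prems(1) u x le_mult_right[of u "lprod G us"] le_trans[of u "u \<otimes> lprod G us" x] by simp
    then have "u = \<one>"
      using x(1) u unfolding reduced_def by blast
    then show ?case
      using Cons r by simp
  qed
  then show ?thesis
    using us n(2) by simp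
qed

lemma factorization_bound_cancel_left:
  assumes "u \<in> M - {\<one>}" "x \<in> M"
    and bound: "\<forall>xs. set xs \<subseteq> M - {\<one>} \<and> lprod G xs = u \<otimes> x \<longrightarrow> length xs \<le> K"
  shows "0 < K" and "\<forall>xs. set xs \<subseteq> M - {\<one>} \<and> lprod G xs = x \<longrightarrow> length xs \<le> K - 1"
proof -
  have cons: "length xs < K" if "set xs \<subseteq> M - {\<one>}" "lprod G xs = x" for xs
    using bound[rule_format, of "u # xs"] that assms(1) by auto
  have "\<exists>ys. set ys \<subseteq> M - {\<one>} \<and> lprod G ys = x"
  proof (cases "x = \<one>")
    case True
    then show ?thesis by (intro exI[of _ "[]"]) simp
  next
    case False
    then show ?thesis using assms(2) by (intro exI[of _ "[x]"]) simp
  qed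
  then show "0 < K"
    using cons by fastforce
  show "\<forall>xs. set xs \<subseteq> M - {\<one>} \<and> lprod G xs = x \<longrightarrow> length xs \<le> K - 1"
    using cons by fastforce
qed

text \<open>Peeling off left divisors in \<open>simples\<^sub>\<delta>\<close> terminates because \<open>M\<close> is Noetherian.\<close>

lemma reduced_decomposition:
  assumes "x \<in> M"
  shows "\<exists>n x0. n \<in> N \<and> x0 \<in> M \<and> reduced x0 \<and> x = n \<otimes> x0"
proof -
  obtain K where "\<forall>xs. set xs \<subseteq> M - {\<one>} \<and> lprod G xs = x \<longrightarrow> length xs \<le> K"
    using M_noetherian assms unfolding noetherian_def by blast
  then show ?thesis
    using assms
  proof (induction K arbitrary: x rule: less_induct)
    case (less K)
    show ?case
    proof (cases "reduced x")
      case True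
      then show ?thesis
        using less.prems by (intro exI[of _ \<one>] exI[of _ x]) simp
    next
      case False
      then obtain u where u: "u \<in> simples\<^sub>\<delta>" "u \<preceq> x" "u \<noteq> \<one>"
        unfolding reduced_def by blast
      define x' where "x' = inv u \<otimes> x"
      have x': "x' \<in> M" "x = u \<otimes> x'"
        unfolding x'_def using u less.prems(2) by (simp_all add: le_iff)
      then have "0 < K" "\<forall>xs. set xs \<subseteq> M - {\<one>} \<and> lprod G xs = x' \<longrightarrow> length xs \<le> K - 1"
        using factorization_bound_cancel_left[of u x' K] u less.prems(1) by auto
      then obtain n x0 where "n \<in> N" "x0 \<in> M" "reduced x0" "x' = n \<otimes> x0"
        using less.IH[of "K - 1" x'] x'(1) by auto
      then show ?thesis
        using x' u delta_simple_in_N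
        by (intro exI[of _ "u \<otimes> n"] exI[of _ x0]) (simp add: m_assoc)
    qed
  qed
qed

lemma reduced_common_left_divisor:
  assumes x0: "x0 \<in> M" "reduced x0" and n: "n \<in> N"
    and z: "z \<in> carrier G" "z \<preceq> n" "z \<preceq> x0"
  shows "inv z \<in> M"
proof -
  define g where "g = meetL n x0"
  have g: "g \<in> M" "g \<preceq> n" "g \<preceq> x0"
    unfolding g_def using x0 n by (simp_all add: meetL_in_M meetL_le_left meetL_le_right)
  then have "g \<in> N"
    using N_left_divisor(1)[OF _ n] by blast
  then have "g = \<one>"
    using reduced_N_le_imp_one[OF x0(2) _ _ g(3)] x0 by simp
  moreover have "z \<preceq> g"
    unfolding g_def using x0 n z by (simp add: meetL_greatest)
  ultimately show ?thesis
    using z(1) by (simp add: le_iff)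
qed

lemma reduced_unique_in_coset:
  assumes x0: "x0 \<in> M" "reduced x0" and x1: "x1 \<in> M" "reduced x1"
    and h: "h \<in> H" "x1 = h \<otimes> x0"
  shows "h = \<one>"
proof -
  obtain n k where n: "n \<in> N" "h = n \<otimes> inv (\<delta> [^] (k::nat))"
    using H_elem_decomp[OF h(1)] by blast
  have hc: "h \<in> carrier G"
    using h(1) H_subset_carrier by blast
  have hd: "h \<otimes> \<delta> [^] k = n"
    using n by (simp add: m_assoc)
  have "inv h \<preceq> \<delta> [^] k" "inv h \<preceq> x0"
    using hd n(1) h(2) x1 hc by (simp_all add: le_iff)
  then have "h \<in> M"
    using reduced_common_left_divisor[OF x0 delta_pow_in_N, of "inv h" k] hc by simp
  moreover have "h \<preceq> n"
    using hd hc by (simp flip: hd add: le_iff)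
  ultimately have "h \<in> N"
    using N_left_divisor(1)[OF _ n(1)] by blast
  moreover have "h \<preceq> x1"
    using h(2) hc x0 by (simp add: le_iff)
  ultimately show ?thesis
    using reduced_N_le_imp_one[OF x1(2)] x1 by simp
qed

lemma reduced_le_Delta_pow:
  assumes x0: "x0 \<in> M" "reduced x0" and h: "h \<in> H" and le: "h \<otimes> x0 \<preceq> \<Delta> [^] (w::nat)"
  shows "x0 \<preceq> \<Delta> [^] w"
proof -
  have hc: "h \<in> carrier G"
    using h H_subset_carrier by blast
  obtain n k where n: "n \<in> N" "inv h = n \<otimes> inv (\<delta> [^] (k::nat))"
    using H_elem_decomp subgroup.m_inv_closed[OF subgroup_H h] by blast
  define z where "z = \<Delta> [^] w \<otimes> inv x0"
  have zc: "z \<in> carrier G"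
    unfolding z_def using x0 by simp
  have "z \<otimes> inv h = \<Delta> [^] w \<otimes> (inv (h \<otimes> x0) \<otimes> \<Delta> [^] w) \<otimes> inv (\<Delta> [^] w)"
    unfolding z_def using hc x0 by (simp add: m_assoc inv_mult_group)
  then have "z \<otimes> inv h \<in> M"
    using M_conj_inv_Delta_pow le by (simp add: le_iff)
  moreover have "z \<otimes> n = (z \<otimes> inv h) \<otimes> \<delta> [^] k"
    using n zc by (simp add: m_assoc)
  ultimately have "inv z \<preceq> n"
    using zc by (simp add: le_iff)
  moreover have "inv z \<preceq> x0"
    unfolding z_def using x0 by (simp add: le_iff m_assoc)
  ultimately have "z \<in> M"
    using reduced_common_left_divisor[OF x0 n(1), of "inv z"] zc by simp
  moreover have "inv x0 \<otimes> \<Delta> [^] w = inv (\<Delta> [^] w) \<otimes> z \<otimes> \<Delta> [^] w"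
    unfolding z_def using x0 by (simp add: m_assoc)
  ultimately show ?thesis
    using M_conj_Delta_pow by (simp add: le_iff)
qed

lemma reduced_iff_reduced_head:
  assumes x: "x \<in> M"
  shows "reduced x \<longleftrightarrow> reduced (head x)"
proof -
  have "u \<preceq> x \<longleftrightarrow> u \<preceq> head x" if u: "u \<in> simples\<^sub>\<delta>" for u
    using head_greatest[OF x, of u] le_trans[OF _ head_le[OF x], of u] x u delta_simple_simple[OF u]
    by (auto simp: simple_le_Delta)
  then show ?thesis
    unfolding reduced_def by blast
qed

section \<open>Counting cosets\<close>

definition reduced_below :: "nat \<Rightarrow> 'a set" where
  "reduced_below w = {x \<in> M. x \<preceq> \<Delta> [^] w \<and> reduced x}"

definition interval_cosets :: "nat \<Rightarrow> nat \<Rightarrow> 'a set set" where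
  "interval_cosets b a = {C \<in> rcosets H. \<exists>x\<in>C. inv (\<Delta> [^] b) \<preceq> x \<and> x \<preceq> \<Delta> [^] a}"

lemma interval_cosets_subset: "interval_cosets b a \<subseteq> rcosets H"
  unfolding interval_cosets_def by blast

lemma finite_reduced_below: "finite (reduced_below w)"
  using finite_le_Delta_pow unfolding reduced_below_def by (rule rev_finite_subset) blast

lemma rcoset_subset_carrier: "C \<in> rcosets H \<Longrightarrow> C \<subseteq> carrier G"
  using subgroup.rcosets_carrier[OF subgroup_H is_group] by blast

lemma rcoset_eq: "C \<in> rcosets H \<Longrightarrow> x \<in> C \<Longrightarrow> C = H #> x"
  unfolding RCOSETS_def using repr_independence[OF _ _ subgroup_H] by blast

lemma rcoset_left_mult: "C \<in> rcosets H \<Longrightarrow> x \<in> C \<Longrightarrow> h \<in> H \<Longrightarrow> h \<otimes> x \<in> C"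
  using rcoset_eq rcosI[OF _ H_subset_carrier] rcoset_subset_carrier by blast

lemma rcoset_quotient: "C \<in> rcosets H \<Longrightarrow> x \<in> C \<Longrightarrow> y \<in> C \<Longrightarrow> y \<otimes> inv x \<in> H"
  using rcoset_eq subgroup.rcos_module_imp[OF subgroup_H is_group] rcoset_subset_carrier by blast

lemma rcosets_shift: "C \<in> rcosets H \<Longrightarrow> g \<in> carrier G \<Longrightarrow> C #> g \<in> rcosets H"
  unfolding RCOSETS_def using coset_mult_assoc[OF H_subset_carrier] by auto

lemma rcosets_shift_inv: "C \<in> rcosets H \<Longrightarrow> g \<in> carrier G \<Longrightarrow> (C #> g) #> inv g = C"
  using coset_mult_assoc[OF rcoset_subset_carrier] rcoset_subset_carrier by simp

lemma inj_on_rcosets_shift: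
  assumes "g \<in> carrier G"
  shows "inj_on (\<lambda>C. C #> g) (rcosets H)"
proof (rule inj_onI)
  fix C1 C2 assume "C1 \<in> rcosets H" "C2 \<in> rcosets H" "C1 #> g = C2 #> g"
  then show "C1 = C2"
    using rcosets_shift_inv[of C1 g] rcosets_shift_inv[of C2 g] assms by metis
qed

lemma interval_cosets_0: "interval_cosets 0 w = (\<lambda>x. H #> x) ` reduced_below w"
proof (intro equalityI subsetI)
  fix C assume "C \<in> interval_cosets 0 w"
  then obtain x where C: "C \<in> rcosets H" "x \<in> C" "\<one> \<preceq> x" "x \<preceq> \<Delta> [^] w"
    unfolding interval_cosets_def by auto
  then have "x \<in> M"
    using rcoset_subset_carrier one_le_iff by blast
  then obtain n x0 where n: "n \<in> N" "x0 \<in> M" "reduced x0" "x = n \<otimes> x0"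
    using reduced_decomposition by blast
  have nH: "n \<in> H"
    using N_subset_H n(1) by blast
  then have "x0 \<preceq> \<Delta> [^] w"
    using reduced_le_Delta_pow[OF n(2,3)] C(4) n(4) by simp
  then have "x0 \<in> reduced_below w"
    unfolding reduced_below_def using n(2,3) by simp
  moreover have "x0 \<in> C"
    using rcoset_left_mult[OF C(1,2) subgroup.m_inv_closed[OF subgroup_H nH]] n
    by (simp add: m_assoc)
  ultimately show "C \<in> (\<lambda>x. H #> x) ` reduced_below w"
    using rcoset_eq[OF C(1)] by blast
next
  fix C assume "C \<in> (\<lambda>x. H #> x) ` reduced_below w"
  then obtain x where x: "x \<in> M" "x \<preceq> \<Delta> [^] w" "C = H #> x"
    unfolding reduced_below_def by blast
  moreover have "x \<in> H #> x" "\<one> \<preceq> x"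
    using x rcos_self[OF _ subgroup_H] by (simp_all add: one_le_iff)
  ultimately show "C \<in> interval_cosets 0 w"
    unfolding interval_cosets_def using rcosetsI[OF H_subset_carrier] by auto
qed

lemma inj_on_rcoset_reduced_below: "inj_on (\<lambda>x. H #> x) (reduced_below w)"
proof
  fix x0 x1 assume x: "x0 \<in> reduced_below w" "x1 \<in> reduced_below w" "H #> x0 = H #> x1"
  then have "x1 \<in> H #> x0"
    using rcos_self[OF _ subgroup_H] unfolding reduced_below_def by auto
  then obtain h where h: "h \<in> H" "x1 = h \<otimes> x0"
    unfolding r_coset_def by blast
  then have "h = \<one>"
    using reduced_unique_in_coset x unfolding reduced_below_def by blast
  then show "x0 = x1"
    using h x unfolding reduced_below_def by simp
qed

lemma interval_cosets_shift:
  "interval_cosets b a = (\<lambda>C. C #> inv (\<Delta> [^] b)) ` interval_cosets 0 (a + b)"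
proof (intro equalityI subsetI)
  fix C assume "C \<in> interval_cosets b a"
  then obtain x where C: "C \<in> rcosets H" "x \<in> C" "inv (\<Delta> [^] b) \<preceq> x" "x \<preceq> \<Delta> [^] a"
    unfolding interval_cosets_def by blast
  have x: "x \<in> carrier G"
    using C rcoset_subset_carrier by blast
  have "x \<otimes> \<Delta> [^] b \<in> C #> \<Delta> [^] b" "\<one> \<preceq> x \<otimes> \<Delta> [^] b" "x \<otimes> \<Delta> [^] b \<preceq> \<Delta> [^] (a + b)"
    using C(2) mult_Delta_pow_in_M[OF x C(3)] mult_Delta_pow_le[OF x C(4), of b] x
    by (auto simp: r_coset_def one_le_iff)
  then have "C #> \<Delta> [^] b \<in> interval_cosets 0 (a + b)"
    unfolding interval_cosets_def using rcosets_shift[OF C(1)] by auto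
  moreover have "C = (C #> \<Delta> [^] b) #> inv (\<Delta> [^] b)"
    using rcosets_shift_inv[OF C(1)] by simp
  ultimately show "C \<in> (\<lambda>C. C #> inv (\<Delta> [^] b)) ` interval_cosets 0 (a + b)"
    by blast
next
  fix C assume "C \<in> (\<lambda>C. C #> inv (\<Delta> [^] b)) ` interval_cosets 0 (a + b)"
  then obtain C' y where C': "C' \<in> rcosets H" "y \<in> C'" "\<one> \<preceq> y" "y \<preceq> \<Delta> [^] (a + b)"
    "C = C' #> inv (\<Delta> [^] b)"
    unfolding interval_cosets_def by auto
  have y: "y \<in> M"
    using C' rcoset_subset_carrier one_le_iff by blast
  then show "C \<in> interval_cosets b a"
    unfolding interval_cosets_def
    using rcosets_shift[OF C'(1)] C'(2,5) mult_inv_Delta_pow_in_interval[OF y C'(4)]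
    by (auto simp: r_coset_def)
qed

lemma
  shows card_interval_cosets: "card (interval_cosets b a) = card (reduced_below (a + b))"
    and finite_interval_cosets: "finite (interval_cosets b a)"
proof -
  have "card (interval_cosets b a) = card (interval_cosets 0 (a + b))"
    unfolding interval_cosets_shift[of b a]
    using card_image inj_on_subset[OF inj_on_rcosets_shift interval_cosets_subset]
    by (metis inv_closed nat_pow_closed Delta_carrier)
  also have "\<dots> = card (reduced_below (a + b))"
    unfolding interval_cosets_0 using card_image[OF inj_on_rcoset_reduced_below] .
  finally show "card (interval_cosets b a) = card (reduced_below (a + b))" .
  show "finite (interval_cosets b a)"
    unfolding interval_cosets_shift[of b a] interval_cosets_0
    using finite_reduced_below by blast
qed

text \<open>After shifting by \<open>\<Delta>\<^bsup>b\<^esup>\<close>, the reduced representative of the part of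
  the coset in \<open>M\<close> lies below \<open>\<Delta>\<^bsup>a+b\<^esup>\<close>.\<close>

lemma coset_meets_interval:
  assumes C: "C \<in> rcosets H" and x: "x \<in> C" "inv (\<Delta> [^] b) \<preceq> x" and y: "y \<in> C" "y \<preceq> \<Delta> [^] a"
  shows "C \<in> interval_cosets b a"
proof -
  have xc: "x \<in> carrier G" and yc: "y \<in> carrier G"
    using C x y rcoset_subset_carrier by auto
  obtain n x0 where n: "n \<in> N" "x0 \<in> M" "reduced x0" "x \<otimes> \<Delta> [^] b = n \<otimes> x0"
    using reduced_decomposition[OF mult_Delta_pow_in_M[OF xc x(2)]] by blast
  have nc: "n \<in> carrier G"
    using n(1) by simp
  have x0: "x0 = inv n \<otimes> x \<otimes> \<Delta> [^] b"
    using n(2,4) nc xc by (simp add: m_assoc)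
  define h where "h = y \<otimes> inv x \<otimes> n"
  have h: "h \<in> H"
    unfolding h_def using rcoset_quotient[OF C x(1) y(1)] N_subset_H n(1) subgroup.m_closed[OF subgroup_H]
    by blast
  have "y \<otimes> \<Delta> [^] b = h \<otimes> x0"
    unfolding h_def x0 using xc yc nc by (simp add: m_assoc)
  then have "h \<otimes> x0 \<preceq> \<Delta> [^] (a + b)"
    using mult_Delta_pow_le[OF yc y(2), of b] by simp
  then have "x0 \<preceq> \<Delta> [^] (a + b)"
    by (rule reduced_le_Delta_pow[OF n(2,3) h])
  moreover have "x0 \<otimes> inv (\<Delta> [^] b) = inv n \<otimes> x"
    unfolding x0 using xc nc by (simp add: m_assoc)
  moreover have "inv n \<otimes> x \<in> C"
    using rcoset_left_mult[OF C x(1)] subgroup.m_inv_closed[OF subgroup_H] N_subset_H n(1) by blast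
  ultimately show ?thesis
    unfolding interval_cosets_def using C mult_inv_Delta_pow_in_interval[OF n(2)] by force
qed

definition coset_ball :: "nat \<Rightarrow> 'a set set" where
  "coset_ball n = {C \<in> rcosets H. coset_length G nontrivial_simples C \<le> n}"

lemma coset_length_le_iff_interval_cosets:
  assumes C: "C \<in> rcosets H"
  shows "coset_length G nontrivial_simples C \<le> n \<longleftrightarrow> (\<exists>b\<le>n. C \<in> interval_cosets b (n - b))"
proof -
  have "coset_length G nontrivial_simples C \<le> n \<longleftrightarrow> (\<exists>y\<in>C. word_length G nontrivial_simples y \<le> n)"
    by (rule coset_length_le_iff[OF subgroup.rcosets_non_empty[OF subgroup_H C]])
  also have "\<dots> \<longleftrightarrow> (\<exists>y\<in>C. \<exists>b\<le>n. inv (\<Delta> [^] b) \<preceq> y \<and> y \<preceq> \<Delta> [^] (n - b))"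
    using rcoset_subset_carrier[OF C] by (intro bex_cong[OF refl] word_length_le_iff_Delta_interval) auto
  also have "\<dots> \<longleftrightarrow> (\<exists>b\<le>n. C \<in> interval_cosets b (n - b))"
    unfolding interval_cosets_def using C by blast
  finally show ?thesis .
qed

lemma coset_ball_eq: "coset_ball n = (\<Union>b\<le>n. interval_cosets b (n - b))"
proof (intro equalityI subsetI)
  fix C assume "C \<in> coset_ball n"
  then show "C \<in> (\<Union>b\<le>n. interval_cosets b (n - b))"
    unfolding coset_ball_def using coset_length_le_iff_interval_cosets by auto
next
  fix C assume C: "C \<in> (\<Union>b\<le>n. interval_cosets b (n - b))"
  then have "C \<in> rcosets H"
    using interval_cosets_subset by auto
  with C show "C \<in> coset_ball n"
    unfolding coset_ball_def using coset_length_le_iff_interval_cosets by auto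
qed

definition cosets_within :: "nat \<Rightarrow> nat \<Rightarrow> 'a set set" where
  "cosets_within n k = (\<Union>b\<le>k. interval_cosets b (n - b))"

lemma cosets_within_Int:
  assumes "Suc k \<le> n"
  shows "cosets_within n k \<inter> interval_cosets (Suc k) (n - Suc k) = interval_cosets k (n - Suc k)"
proof (intro equalityI subsetI)
  fix C assume "C \<in> cosets_within n k \<inter> interval_cosets (Suc k) (n - Suc k)"
  then obtain b x y where "b \<le> k" "C \<in> rcosets H" "x \<in> C" "inv (\<Delta> [^] b) \<preceq> x"
    "y \<in> C" "y \<preceq> \<Delta> [^] (n - Suc k)"
    unfolding cosets_within_def interval_cosets_def by blast
  then show "C \<in> interval_cosets k (n - Suc k)"
    using coset_meets_interval inv_Delta_pow_le_mono rcoset_subset_carrier by blast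
next
  fix C assume "C \<in> interval_cosets k (n - Suc k)"
  then obtain x where C: "C \<in> rcosets H" "x \<in> C" "inv (\<Delta> [^] k) \<preceq> x" "x \<preceq> \<Delta> [^] (n - Suc k)"
    unfolding interval_cosets_def by blast
  have x: "x \<in> carrier G"
    using C rcoset_subset_carrier by blast
  have "C \<in> interval_cosets k (n - k)"
    unfolding interval_cosets_def using C le_Delta_pow_mono[OF x C(4), of "n - k"] by auto
  then have "C \<in> cosets_within n k"
    unfolding cosets_within_def by blast
  moreover have "C \<in> interval_cosets (Suc k) (n - Suc k)"
    unfolding interval_cosets_def using C inv_Delta_pow_le_mono[OF x C(3), of "Suc k"] by auto
  ultimately show "C \<in> cosets_within n k \<inter> interval_cosets (Suc k) (n - Suc k)"
    by blast
qed

lemma finite_cosets_within: "finite (cosets_within n k)"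
  unfolding cosets_within_def using finite_interval_cosets by simp

lemma card_cosets_within:
  "k \<le> n \<Longrightarrow> card (cosets_within n k) + k * card (reduced_below (n - 1)) = Suc k * card (reduced_below n)"
proof (induction k)
  case 0
  then show ?case
    unfolding cosets_within_def by (simp add: card_interval_cosets)
next
  case (Suc k)
  have "cosets_within n (Suc k) = cosets_within n k \<union> interval_cosets (Suc k) (n - Suc k)"
    unfolding cosets_within_def by (simp add: atMost_Suc Un_commute)
  then have "card (cosets_within n (Suc k)) + card (interval_cosets k (n - Suc k)) =
      card (cosets_within n k) + card (interval_cosets (Suc k) (n - Suc k))"
    using card_Un_Int[OF finite_cosets_within finite_interval_cosets] cosets_within_Int[OF Suc.prems]
    by simp
  moreover have "card (interval_cosets k (n - Suc k)) = card (reduced_below (n - 1))"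
    "card (interval_cosets (Suc k) (n - Suc k)) = card (reduced_below n)"
    using Suc.prems by (simp_all add: card_interval_cosets)
  ultimately show ?case
    using Suc by simp
qed

lemma card_coset_ball:
  "card (coset_ball n) + n * card (reduced_below (n - 1)) = Suc n * card (reduced_below n)"
  using card_cosets_within[of n n] unfolding cosets_within_def coset_ball_eq by simp

lemma finite_coset_ball: "finite (coset_ball n)"
  unfolding coset_ball_eq using finite_interval_cosets by simp

lemma coset_count_add:
  "coset_count G H nontrivial_simples n + (if n = 0 then 0 else card (coset_ball (n - 1))) =
    card (coset_ball n)"
proof (cases n)
  case 0
  then show ?thesis
    unfolding coset_count_def coset_ball_def by simp
next
  case (Suc m)
  have "coset_ball (Suc m) = {C \<in> rcosets H. coset_length G nontrivial_simples C = Suc m} \<union> coset_ball m"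
    unfolding coset_ball_def by auto
  moreover have "finite (coset_ball (Suc m))"
    by (rule finite_coset_ball)
  ultimately show ?thesis
    unfolding coset_count_def using Suc
    by (simp add: card_Un_disjoint coset_ball_def disjoint_iff)
qed

lemma card_reduced_below_eq_sum:
  "card (reduced_below w) = (\<Sum>s\<in>{s \<in> simples. reduced s}. head_count w s)"
proof -
  have fin: "finite {x \<in> M. x \<preceq> \<Delta> [^] w \<and> P x}" for P
    using finite_le_Delta_pow by (rule rev_finite_subset) blast
  have "reduced_below w = (\<Union>s\<in>{s \<in> simples. reduced s}. {x \<in> M. x \<preceq> \<Delta> [^] w \<and> head x = s})"
    unfolding reduced_below_def using reduced_iff_reduced_head head_simple by auto
  also have "card \<dots> = (\<Sum>s\<in>{s \<in> simples. reduced s}. head_count w s)"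
    unfolding head_count_def by (rule card_UN_disjoint) (use finite_simples fin in auto)
  finally show ?thesis .
qed

lemma rational_fps_reduced_below: "rational_fps (Abs_fps (\<lambda>w. of_nat (card (reduced_below w)) :: 'k::field))"
proof -
  have "\<forall>s\<in>simples. rational_fps (Abs_fps (\<lambda>w. of_nat (head_count w s) :: 'k))"
  proof (rule rational_fps_linear_recurrence[OF finite_simples])
    fix w s assume "s \<in> simples"
    then show "(of_nat (head_count (Suc w) s) :: 'k) =
        (\<Sum>s'\<in>simples. (if head (s \<otimes> s') = s then 1 else 0) * of_nat (head_count w s'))"
      by (auto simp: head_count_Suc of_nat_sum intro!: sum.cong)
  qed
  moreover have "Abs_fps (\<lambda>w. of_nat (card (reduced_below w)) :: 'k) =
      (\<Sum>s\<in>{s \<in> simples. reduced s}. Abs_fps (\<lambda>w. of_nat (head_count w s)))"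
    by (rule fps_ext) (simp add: card_reduced_below_eq_sum fps_sum_nth)
  ultimately show ?thesis
    by (auto intro!: rational_fps_sum)
qed

theorem rational_coset_growth_series:
  "rational_fps (Abs_fps (\<lambda>n. of_nat (coset_count G H nontrivial_simples n) :: 'k::field))"
proof -
  define R where "R = Abs_fps (\<lambda>w. of_nat (card (reduced_below w)) :: 'k)"
  define L where "L n = (of_nat (card (coset_ball n)) :: 'k)" for n
  have "L n = of_nat (Suc n) * of_nat (card (reduced_below n)) -
      of_nat n * of_nat (card (reduced_below (n - 1)))" for n
    using arg_cong[OF card_coset_ball[of n], of "of_nat :: nat \<Rightarrow> 'k"] unfolding L_def
    by (simp add: eq_diff_eq algebra_simps)
  then have "Abs_fps L = (1 - fps_X) * Abs_fps (\<lambda>n. of_nat (Suc n) * of_nat (card (reduced_below n)))"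
    by (intro Abs_fps_eq_one_minus_X_mult) (simp split: nat.split)
  also have "Abs_fps (\<lambda>n. of_nat (Suc n) * of_nat (card (reduced_below n))) = fps_deriv (fps_X * R)"
    unfolding R_def by (rule fps_ext) (simp add: algebra_simps)
  finally have "Abs_fps L = (1 - fps_X) * fps_deriv (fps_X * R)" .
  moreover have "of_nat (coset_count G H nontrivial_simples n) = L n - (if n = 0 then 0 else L (n - 1))" for n
    using arg_cong[OF coset_count_add[of n], of "of_nat :: nat \<Rightarrow> 'k"] unfolding L_def
    by (cases n) (simp_all add: eq_diff_eq)
  then have "Abs_fps (\<lambda>n. of_nat (coset_count G H nontrivial_simples n) :: 'k) = (1 - fps_X) * Abs_fps L"
    by (rule Abs_fps_eq_one_minus_X_mult)
  moreover have "rational_fps (1 - fps_X :: 'k fps)"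
    using rational_fps_diff[OF rational_fps_const[of 1] rational_fps_X] by simp
  moreover have "rational_fps (fps_deriv (fps_X * R))"
    unfolding R_def by (intro rational_fps_deriv rational_fps_mult rational_fps_X rational_fps_reduced_below)
  ultimately show ?thesis
    by (metis rational_fps_mult)
qed

end

theorem corollary4p3:
  fixes G :: "('a, 'b) monoid_scheme" and M H N :: "'a set" and \<Delta> \<delta> :: 'a
  assumes "garside_structure G M \<Delta>"
    and "parabolic_substructure G M \<Delta> H N \<delta>"
    and "H \<noteq> {\<one>\<^bsub>G\<^esub>}"
  shows "rational_fps (Abs_fps (\<lambda>n. of_nat (coset_count G H (Div G M \<Delta> - {\<one>\<^bsub>G\<^esub>}) n) :: rat))"
proof -
  interpret parabolic G M \<Delta> H N \<delta>
    using assms(1,2) unfolding parabolic_def parabolic_axioms_def garside_def garside_axioms_def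
    by (simp add: garside_structure_def)
  show ?thesis
    using rational_coset_growth_series .
qed

end
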